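(* Assume the setting below, on the A-mesh $S_{1/\varepsilon}$ (i.e. $\lambda=\varepsilon^{-1}$) with mesh parameter $a>3$. There exist $N_0$ and $C$, both independent of $\varepsilon$, such that for all $N\ge N_0$, \[ |\tau_i[y]|\le C\begin{cases} (\ln\varepsilon)^2N^{-2}, & 1\le i\le J-1,\\ \min\{\varepsilon,N^{-1}\}N^{-1}+\varepsilon^2N^{-1}, & i=J,\\ \min\{\varepsilon,N^{-1}\}N^{-1}, & J+1\le i\le N-1.\end{cases} \]
   Context: Let $0<\varepsilon<1$. Let $b,c,f\in C^4[0,1]$, and let $\beta$ be a constant with $b(x)>\beta>0$ and $c(x)\ge0$ on $[0,1]$. Let $u$ be the solution of $-\varepsilon u''-bu'+cu=f$ on $(0,1)$ with $u(0)=u(1)=0$. Let $u_0$ be the solution of $-bu_0'+cu_0=f$ on $(0,1)$ with $u_0(1)=0$. Set $w=u-u_0$, $v(x)=-\frac{\varepsilon u'(0)}{b(0)}e^{-b(0)x/\varepsilon}$ and $y=w-v$. Mesh $S_\lambda$, $\lambda\in\{N,\varepsilon^{-1}\}$. $N$ is a positive integer. $Q\in(0,1)$ is a fixed rational with $J=QN$ an integer, and $a>0$. Set $\xi=(a\varepsilon/\beta)\ln\lambda$, assumed $\le Q$, and $h=\xi/J$, $H=(1-\xi)/(N-J)$. The mesh points are $x_i=ih$ ($0\le i\le J$) and $x_i=\xi+(i-J)H$ ($J\le i\le N$). Write $h_i=x_i-x_{i-1}$ and $\hbar_i=(h_i+h_{i+1})/2$. Define $D^+g(x_i)=(g(x_{i+1})-g(x_i))/h_{i+1}$,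 $D^-g(x_i)=(g(x_i)-g(x_{i-1}))/h_i$, $D''g(x_i)=(D^+g(x_i)-D^-g(x_i))/\hbar_i$. Let $\sigma(\rho)=2\rho/(e^{2\rho}-1)$ for $\rho>0$, $\sigma(0)=1$, and $\rho_i=b(x_i)h_{i+1}/(2\varepsilon)$. The truncation error of the ASI scheme is $\tau_i[g]=-\varepsilon\sigma(\rho_i)D''g(x_i)-b(x_i)D^+g(x_i)+\varepsilon g''(x_i)+b(x_i)g'(x_i)$ for $1\le i\le N-1$. *)

theory Defs
  imports "HOL-Analysis.Analysis"
begin

definition Ck_on :: "nat \<Rightarrow> real set \<Rightarrow> (real \<Rightarrow> real) \<Rightarrow> bool" where
  "Ck_on k S g \<longleftrightarrow> (\<exists>D :: nat \<Rightarrow> real \<Rightarrow> real.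
      (\<forall>x\<in>S. D 0 x = g x) \<and>
      (\<forall>j<k. \<forall>x\<in>S. (D j has_real_derivative D (Suc j) x) (at x within S)) \<and>
      (\<forall>j\<le>k. continuous_on S (D j)))"

definition mesh_xi :: "real \<Rightarrow> real \<Rightarrow> real \<Rightarrow> real \<Rightarrow> real" where
  "mesh_xi a eps beta lam = (a * eps / beta) * ln lam"

definition mesh_pt :: "real \<Rightarrow> real \<Rightarrow> real \<Rightarrow> real \<Rightarrow> nat \<Rightarrow> nat \<Rightarrow> nat \<Rightarrow> real" where
  "mesh_pt a eps beta lam N J i =
     (let xi = mesh_xi a eps beta lam in
      if i \<le> J then real i * (xi / real J)
      else xi + real (i - J) * ((1 - xi) / real (N - J)))"

definition hstep :: "(nat \<Rightarrow> real) \<Rightarrow> nat \<Rightarrow> real" where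
  "hstep x i = x i - x (i - 1)"

definition hbar :: "(nat \<Rightarrow> real) \<Rightarrow> nat \<Rightarrow> real" where
  "hbar x i = (hstep x i + hstep x (i + 1)) / 2"

definition Dplus :: "(nat \<Rightarrow> real) \<Rightarrow> (real \<Rightarrow> real) \<Rightarrow> nat \<Rightarrow> real" where
  "Dplus x g i = (g (x (i + 1)) - g (x i)) / hstep x (i + 1)"

definition Dminus :: "(nat \<Rightarrow> real) \<Rightarrow> (real \<Rightarrow> real) \<Rightarrow> nat \<Rightarrow> real" where
  "Dminus x g i = (g (x i) - g (x (i - 1))) / hstep x i"

definition D2 :: "(nat \<Rightarrow> real) \<Rightarrow> (real \<Rightarrow> real) \<Rightarrow> nat \<Rightarrow> real" where
  "D2 x g i = (Dplus x g i - Dminus x g i) / hbar x i"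

definition sigma :: "real \<Rightarrow> real" where
  "sigma r = (if r = 0 then 1 else 2 * r / (exp (2 * r) - 1))"

definition rho :: "real \<Rightarrow> (real \<Rightarrow> real) \<Rightarrow> (nat \<Rightarrow> real) \<Rightarrow> nat \<Rightarrow> real" where
  "rho eps b x i = b (x i) * hstep x (i + 1) / (2 * eps)"

text \<open>Truncation error of the ASI scheme applied to g, whose first and second
  derivatives are g1 and g2.\<close>
definition tau :: "real \<Rightarrow> (real \<Rightarrow> real) \<Rightarrow> (nat \<Rightarrow> real) \<Rightarrow>
    (real \<Rightarrow> real) \<Rightarrow> (real \<Rightarrow> real) \<Rightarrow> (real \<Rightarrow> real) \<Rightarrow> nat \<Rightarrow> real" where
  "tau eps b x g g1 g2 i =
     - eps * sigma (rho eps b x i) * D2 x g i - b (x i) * Dplus x g i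
     + eps * g2 (x i) + b (x i) * g1 (x i)"

end

theory Submission
  imports Defs
begin

(* Write u = u0 + v + y with the reduced solution u0 and the layer term
   v = K exp (- b(0) x / eps), K = - eps u'(0) / b(0).  The remainder y solves
   L y = eps u0'' - K L (exp (- b(0) x / eps)) = O(eps + exp (- beta x / eps)), so barrier
   functions and first-order comparison, applied to the successively differentiated equation,
   bound the k-th derivative of y by C (eps + eps^(1-k) exp (- beta x / eps)) for k = 2, 3
   and by C (1 + eps^(-3) exp (- beta x / eps)) for k = 4.
   By Taylor expansion the truncation error at a mesh point is controlled by the defect
   |1 - sigma r - r| of the fitting factor (at most 8 r^2, and at most 1 + r) times |y''|,
   plus step-size terms in the third and fourth derivatives.  On the fine part
   h / eps = O(ln (1/eps) / N), which gives (ln eps)^2 N^-2.  From one fine step before the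
   transition point on, exp (- beta x / eps) <= eps^3 because a > 3, so all derivatives there
   are O(eps), and the coarse step H = O(1/N) gives min (eps, 1/N) / N. *)

lemma abs_mult_le_mult:
  fixes a b A B :: real
  assumes "\<bar>a\<bar> \<le> A" "\<bar>b\<bar> \<le> B"
  shows "\<bar>a * b\<bar> \<le> A * B"
  using assms by (simp add: abs_mult mult_mono')

lemma exp_decay_mono:
  fixes eps x beta b0 :: real
  assumes "eps > 0" "x \<ge> 0" "beta \<le> b0"
  shows "exp (- b0 * x / eps) \<le> exp (- beta * x / eps)"
proof -
  have "beta * x / eps \<le> b0 * x / eps" using assms by (intro divide_right_mono mult_right_mono) auto
  then show ?thesis by simp
qed

lemma exp_decay_absorbs_linear:
  fixes eps x beta beta1 b0 :: real
  assumes "eps > 0" "x \<ge> 0" "beta1 \<le> b0" "beta < beta1"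
  shows "exp (- b0 * x / eps) * (x / eps) \<le> exp (- beta * x / eps) / (beta1 - beta)"
proof -
  define t where "t = x / eps"
  have t: "t \<ge> 0" using assms by (simp add: t_def)
  have "(beta1 - beta) * t \<le> (b0 - beta) * t" using assms t by (intro mult_right_mono) auto
  also have "\<dots> \<le> exp ((b0 - beta) * t)" using exp_ge_add_one_self[of "(b0 - beta) * t"] by linarith
  finally have "t \<le> exp ((b0 - beta) * t) / (beta1 - beta)"
    using assms by (simp add: field_simps mult.commute)
  then have "exp (- b0 * t) * t \<le> exp (- b0 * t) * (exp ((b0 - beta) * t) / (beta1 - beta))"
    by (rule mult_left_mono) simp
  also have "\<dots> = exp (- beta * t) / (beta1 - beta)"
    by (simp add: mult_exp_exp algebra_simps)
  finally show ?thesis unfolding t_def by simp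
qed

lemma exp_neg_inverse_le:
  fixes eps beta b0 :: real
  assumes "eps > 0" "beta > 0" "beta \<le> b0"
  shows "exp (- b0 / eps) \<le> eps / beta"
proof -
  have "beta / eps \<le> b0 / eps" using assms by (intro divide_right_mono) auto
  also have "\<dots> \<le> exp (b0 / eps)" using exp_ge_add_one_self[of "b0 / eps"] by linarith
  finally have "1 / exp (b0 / eps) \<le> 1 / (beta / eps)" using assms by (intro divide_left_mono) auto
  then show ?thesis by (simp add: exp_minus inverse_eq_divide)
qed

definition deriv_on :: "(real \<Rightarrow> real) \<Rightarrow> (real \<Rightarrow> real) \<Rightarrow> real set \<Rightarrow> bool" where
  "deriv_on f f' S \<longleftrightarrow> (\<forall>x\<in>S. (f has_real_derivative f' x) (at x within S))"

lemma deriv_on_continuous_on: "deriv_on f f' S \<Longrightarrow> continuous_on S f"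
  unfolding deriv_on_def by (rule DERIV_continuous_on) auto

lemma deriv_on_interior:
  "deriv_on f f' S \<Longrightarrow> x \<in> interior S \<Longrightarrow> (f has_real_derivative f' x) (at x)"
  unfolding deriv_on_def by (metis at_within_interior interior_subset subsetD)

lemma deriv_on_subset: "deriv_on f f' S \<Longrightarrow> T \<subseteq> S \<Longrightarrow> deriv_on f f' T"
  unfolding deriv_on_def by (meson has_field_derivative_subset subsetD)

lemma deriv_on_cong:
  assumes "deriv_on g g' S" "\<forall>x\<in>S. g x = h x" "\<forall>x\<in>S. g' x = h' x"
  shows "deriv_on h h' S"
  unfolding deriv_on_def
proof
  fix x assume x: "x \<in> S"
  have "(g has_real_derivative g' x) (at x within S)" using assms(1) x by (auto simp: deriv_on_def)
  then have "(h has_real_derivative g' x) (at x within S)"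
    by (rule has_field_derivative_transform_within[where d=1]) (use assms(2) x in auto)
  then show "(h has_real_derivative h' x) (at x within S)" using assms(3) x by simp
qed

lemma deriv_on_unique:
  assumes "deriv_on f g1 {l..r}" "deriv_on f g2 {l..r}" "l < r"
  shows "\<forall>x\<in>{l..r}. g1 x = g2 x"
proof
  fix x assume x: "x \<in> {l..r}"
  have "(f has_vector_derivative g1 x) (at x within cbox l r)"
       "(f has_vector_derivative g2 x) (at x within cbox l r)"
    using assms x unfolding deriv_on_def cbox_interval
    by (auto simp: has_real_derivative_iff_has_vector_derivative)
  then show "g1 x = g2 x"
    using vector_derivative_unique_within_closed_interval[of l r x f "g1 x" "g2 x"] x assms(3)
    by (auto simp: cbox_interval)
qed

lemma deriv_on_MVT:
  assumes "deriv_on f f' S" "{a..b} \<subseteq> S" "a < b"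
  shows "\<exists>z. a < z \<and> z < b \<and> f b - f a = (b - a) * f' z"
proof -
  have cont: "continuous_on {a..b} f"
    using continuous_on_subset[OF deriv_on_continuous_on[OF assms(1)] assms(2)] .
  have deriv: "(f has_real_derivative f' z) (at z)" if "a < z" "z < b" for z
  proof (rule deriv_on_interior[OF assms(1)])
    have "z \<in> interior {a..b}" using that by simp
    then show "z \<in> interior S" using interior_mono[OF assms(2)] by blast
  qed
  then have "f differentiable (at z)" if "a < z" "z < b" for z
    using that real_differentiable_def by blast
  from MVT[OF assms(3) cont this] obtain l z
    where z: "a < z" "z < b" "DERIV f z :> l" "f b - f a = (b - a) * l"
    by blast
  with deriv[OF z(1,2)] show ?thesis using DERIV_unique by blast
qed

lemma deriv_on_lipschitz:
  assumes "deriv_on f f' S" "{a..b} \<subseteq> S" "a \<le> b" "\<forall>t\<in>{a..b}. \<bar>f' t\<bar> \<le> M"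
  shows "\<bar>f b - f a\<bar> \<le> M * (b - a)"
proof (cases "a = b")
  case False
  then obtain z where z: "a < z" "z < b" "f b - f a = (b - a) * f' z"
    using deriv_on_MVT[OF assms(1,2)] assms(3) by fastforce
  have "\<bar>f b - f a\<bar> = (b - a) * \<bar>f' z\<bar>" using z by (simp add: abs_mult)
  also have "\<dots> \<le> (b - a) * M" using assms(3,4) z by (intro mult_left_mono) auto
  finally show ?thesis by (simp add: mult.commute)
qed simp

section \<open>Maximum principle and comparison on [0,1]\<close>

lemma deriv_at_min_01:
  assumes "deriv_on f f' {0..1}" "x \<in> {0..1}" "\<forall>y\<in>{0..1}. f x \<le> f y"
  shows "x < 1 \<Longrightarrow> f' x \<ge> 0" and "0 < x \<Longrightarrow> f' x \<le> 0"
proof -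
  assume x1: "x < 1"
  have "(f has_real_derivative f' x) (at x within {x..1})"
    using deriv_on_subset[OF assms(1), of "{x..1}"] assms(2) by (auto simp: deriv_on_def)
  then have "((\<lambda>y. (f y - f x) / (y - x)) \<longlongrightarrow> f' x) (at_right x)"
    using has_field_derivative_iff at_within_Icc_at_right[OF x1] by metis
  moreover have "eventually (\<lambda>y. 0 \<le> (f y - f x) / (y - x)) (at_right x)"
    unfolding eventually_at_right_field
    using x1 assms(2,3) by (intro exI[of _ 1]) auto
  ultimately show "f' x \<ge> 0"
    by (intro tendsto_lowerbound) auto
next
  assume x0: "0 < x"
  have "(f has_real_derivative f' x) (at x within {0..x})"
    using deriv_on_subset[OF assms(1), of "{0..x}"] assms(2) by (auto simp: deriv_on_def)
  then have "((\<lambda>y. (f y - f x) / (y - x)) \<longlongrightarrow> f' x) (at_left x)"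
    using has_field_derivative_iff at_within_Icc_at_left[OF x0] by metis
  moreover have "eventually (\<lambda>y. (f y - f x) / (y - x) \<le> 0) (at_left x)"
    unfolding eventually_at_left_field
    using x0 assms(2,3) by (intro exI[of _ 0]) (auto simp: divide_nonneg_neg)
  ultimately show "f' x \<le> 0"
    by (intro tendsto_upperbound) auto
qed

lemma deriv2_at_interior_min_01:
  assumes "deriv_on f f' {0..1}" "deriv_on f' f'' {0..1}" "0 < x" "x < 1"
    and min: "\<forall>y\<in>{0..1}. f x \<le> f y"
  shows "f' x = 0" and "f'' x \<ge> 0"
proof -
  show f'0: "f' x = 0"
    using deriv_at_min_01[OF assms(1) _ min] assms(3,4) by force
  show "f'' x \<ge> 0"
  proof (rule ccontr)
    assume "\<not> f'' x \<ge> 0"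
    moreover have "(f' has_real_derivative f'' x) (at x)"
      using deriv_on_interior[OF assms(2)] assms(3,4) by simp
    ultimately obtain d where d: "d > 0" "\<forall>h>0. h < d \<longrightarrow> f' x > f' (x + h)"
      using DERIV_neg_dec_right by (metis not_le)
    define h where "h = min d (1 - x) / 2"
    have h: "0 < h" "h < d" "x + h \<le> 1"
      using d assms(3,4) unfolding h_def by (auto simp: min_def field_simps)
    obtain z where z: "x < z" "z < x + h" "f (x + h) - f x = h * f' z"
      using deriv_on_MVT[OF assms(1), of x "x + h"] h assms(3) by auto
    have "f' z < 0" using d(2)[rule_format, of "z - x"] z h f'0 by auto
    then have "f (x + h) < f x" using z h(1) mult_pos_neg[of h "f' z"] by linarith
    moreover have "f x \<le> f (x + h)" using min h assms(3) by auto
    ultimately show False by simp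
  qed
qed

text \<open>With \<open>eps = 0\<close> the operator is the reduced first-order one; the condition at \<open>0\<close>
  then replaces the missing boundary condition there.\<close>

lemma maximum_principle_01:
  fixes z z' z'' b c :: "real \<Rightarrow> real"
  assumes "eps \<ge> 0" "deriv_on z z' {0..1}" "deriv_on z' z'' {0..1}"
    and L: "\<forall>x\<in>{0<..<1}. - eps * z'' x - b x * z' x + c x * z x > 0"
    and c: "\<forall>x\<in>{0..1}. c x \<ge> 0" and z1: "z 1 \<ge> 0" and z0: "z 0 < 0 \<longrightarrow> z' 0 < 0"
  shows "\<forall>x\<in>{0..1}. z x \<ge> 0"
proof (rule ccontr)
  assume "\<not> ?thesis"
  then obtain x1 where x1: "x1 \<in> {0..1}" "z x1 < 0" by auto
  obtain m where m: "m \<in> {0..1}" "\<forall>y\<in>{0..1}. z m \<le> z y"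
    using continuous_attains_inf[OF _ _ deriv_on_continuous_on[OF assms(2)]] by auto
  have zm: "z m < 0" using m x1 by force
  have "m \<noteq> 1" using zm z1 by auto
  moreover have "m \<noteq> 0"
  proof
    assume "m = 0"
    then have "z' 0 \<ge> 0" using deriv_at_min_01(1)[OF assms(2) m] by simp
    then show False using z0 zm \<open>m = 0\<close> by simp
  qed
  ultimately have mi: "0 < m" "m < 1" using m(1) by auto
  from deriv2_at_interior_min_01[OF assms(2,3) mi m(2)] have "z' m = 0" "z'' m \<ge> 0" by auto
  moreover have "c m * z m \<le> 0" using c mi zm by (simp add: mult_nonneg_nonpos)
  moreover have "eps * z'' m \<ge> 0" using assms(1) \<open>z'' m \<ge> 0\<close> by simp
  ultimately have "- eps * z'' m - b m * z' m + c m * z m \<le> 0" by simp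
  with L mi show False by force
qed

lemma barrier_bound_01:
  fixes v v' v'' p p' p'' b c :: "real \<Rightarrow> real"
  assumes "eps \<ge> 0" "deriv_on v v' {0..1}" "deriv_on v' v'' {0..1}"
    "deriv_on p p' {0..1}" "deriv_on p' p'' {0..1}"
    and c: "\<forall>x\<in>{0..1}. c x \<ge> 0"
    and L: "\<forall>x\<in>{0<..<1}. \<bar>- eps * v'' x - b x * v' x + c x * v x\<bar>
                            < - eps * p'' x - b x * p' x + c x * p x"
    and at1: "\<bar>v 1\<bar> \<le> p 1"
    and at0: "\<And>sg. sg = 1 \<or> sg = -1 \<Longrightarrow> p 0 < sg * v 0 \<Longrightarrow> p' 0 < sg * v' 0"
  shows "\<forall>x\<in>{0..1}. \<bar>v x\<bar> \<le> p x"
proof -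
  have "\<forall>x\<in>{0..1}. 0 \<le> p x - sg * v x" if sg: "sg = 1 \<or> sg = -1" for sg
  proof (rule maximum_principle_01[OF assms(1) _ _ _ c])
    show "deriv_on (\<lambda>x. p x - sg * v x) (\<lambda>x. p' x - sg * v' x) {0..1}"
      "deriv_on (\<lambda>x. p' x - sg * v' x) (\<lambda>x. p'' x - sg * v'' x) {0..1}"
      using assms(2-5) unfolding deriv_on_def by (auto intro!: derivative_eq_intros)
    show "\<forall>x\<in>{0<..<1}. - eps * (p'' x - sg * v'' x) - b x * (p' x - sg * v' x)
        + c x * (p x - sg * v x) > 0"
    proof
      fix x :: real assume x: "x \<in> {0<..<1}"
      have "sg * (- eps * v'' x - b x * v' x + c x * v x) < - eps * p'' x - b x * p' x + c x * p x"
        using L x sg by (auto simp: abs_less_iff)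
      then show "- eps * (p'' x - sg * v'' x) - b x * (p' x - sg * v' x)
          + c x * (p x - sg * v x) > 0"
        by (simp add: algebra_simps)
    qed
    show "0 \<le> p 1 - sg * v 1" using at1 sg by (auto simp: abs_le_iff)
    show "p 0 - sg * v 0 < 0 \<longrightarrow> p' 0 - sg * v' 0 < 0" using at0[OF sg] by auto
  qed
  then show ?thesis by (fastforce simp: abs_le_iff)
qed

lemma first_order_minimum_principle_01:
  assumes "deriv_on z z' {0..1}" "z 0 \<ge> 0" "\<forall>x\<in>{0<..1}. z x < 0 \<longrightarrow> z' x > 0"
  shows "\<forall>x\<in>{0..1}. z x \<ge> 0"
proof (rule ccontr)
  assume "\<not> ?thesis"
  then obtain x1 where x1: "x1 \<in> {0..1}" "z x1 < 0" by auto
  obtain m where m: "m \<in> {0..1}" "\<forall>y\<in>{0..1}. z m \<le> z y"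
    using continuous_attains_inf[OF _ _ deriv_on_continuous_on[OF assms(1)]] by auto
  have zm: "z m < 0" using m x1 by force
  then have "0 < m" using assms(2) m(1) by (cases "m = 0") auto
  then have "z' m \<le> 0" using deriv_at_min_01(2)[OF assms(1) m] by blast
  with assms(3) zm \<open>0 < m\<close> m(1) show False by force
qed

text \<open>Since \<open>b \<ge> beta1 > beta\<close>, the layer term \<open>exp (- beta x / eps)\<close> is a
  supersolution of \<open>eps s' + b s\<close> with room \<open>beta1 - beta\<close> to absorb the right-hand side.\<close>

lemma first_order_comparison_01:
  fixes s s' b rho :: "real \<Rightarrow> real"
  assumes eps: "eps > 0" and beta: "beta > 0" "beta1 > beta"
    and b: "\<forall>x\<in>{0..1}. b x \<ge> beta1"
    and d: "deriv_on s s' {0..1}"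
    and eq: "\<forall>x\<in>{0..1}. eps * s' x + b x * s x = rho x"
    and rho: "\<forall>x\<in>{0..1}. \<bar>rho x\<bar> \<le> P + R * exp (- beta * x / eps)"
    and s0: "\<bar>s 0\<bar> \<le> S0" and P: "P \<ge> 0" and R: "R \<ge> 0"
  shows "\<forall>x\<in>{0..1}. \<bar>s x\<bar> \<le> P / beta + (S0 + R / (beta1 - beta)) * exp (- beta * x / eps)"
proof -
  define M where "M = S0 + R / (beta1 - beta)"
  define E where "E = (\<lambda>x. exp (- beta * x / eps))"
  have "S0 \<ge> 0" using s0 by linarith
  have "(beta1 - beta) * M = (beta1 - beta) * S0 + R"
    using beta unfolding M_def by (simp add: field_simps)
  then have M: "M \<ge> S0" "(beta1 - beta) * M \<ge> R"
    using beta R \<open>S0 \<ge> 0\<close> unfolding M_def by auto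
  have "\<forall>x\<in>{0..1}. 0 \<le> P / beta + M * E x - sg * s x" if sg: "sg = 1 \<or> sg = -1" for sg
  proof (rule first_order_minimum_principle_01)
    define z where "z = (\<lambda>x. P / beta + M * E x - sg * s x)"
    define z' where "z' = (\<lambda>x. - beta / eps * M * E x - sg * s' x)"
    show "deriv_on z z' {0..1}"
      using d eps unfolding deriv_on_def z_def z'_def E_def
      by (auto intro!: derivative_eq_intros simp: field_simps)
    have "P / beta \<ge> 0" using P beta by simp
    then show "z 0 \<ge> 0"
      using M sg s0 by (auto simp: z_def E_def abs_le_iff)
    show "\<forall>x\<in>{0<..1}. z x < 0 \<longrightarrow> z' x > 0"
    proof (intro ballI impI)
      fix x assume x: "x \<in> {0<..1}" and zx: "z x < 0"
      have bx: "b x \<ge> beta1" using b x by auto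
      have e: "rho x = eps * s' x + b x * s x" using eq x by auto
      have "eps * z' x = - beta * M * E x - sg * (rho x - b x * s x)"
        unfolding z'_def e using eps by (simp add: field_simps)
      also have "\<dots> = (b x - beta) * M * E x + (b x / beta) * P - sg * rho x - b x * z x"
        unfolding z_def by (simp add: algebra_simps)
      finally have "eps * z' x = (b x - beta) * M * E x + (b x / beta) * P
          - sg * rho x - b x * z x" .
      moreover have "(b x - beta) * M * E x \<ge> R * E x"
        using M bx \<open>S0 \<ge> 0\<close> R beta
        by (intro mult_right_mono) (auto simp: E_def intro: order_trans[OF _ mult_right_mono])
      moreover have "(b x / beta) * P \<ge> 1 * P"
        using bx beta P by (intro mult_right_mono) (auto simp: field_simps)
      moreover have "sg * rho x \<le> P + R * E x" using rho x sg by (auto simp: E_def abs_le_iff)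
      moreover have "b x * z x < 0" using bx beta zx by (simp add: mult_pos_neg)
      ultimately have "eps * z' x > 0" by linarith
      then show "z' x > 0" using eps by (simp add: zero_less_mult_iff)
    qed
  qed
  then show ?thesis unfolding M_def E_def by (fastforce simp: abs_le_iff)
qed

lemma first_order_layer_bound:
  fixes s s' b rho :: "real \<Rightarrow> real" and k :: nat
  assumes eps: "eps > 0" and beta: "beta > 0" "beta1 > beta"
    and b: "\<forall>x\<in>{0..1}. b x \<ge> beta1"
    and d: "deriv_on s s' {0..1}"
    and eq: "\<forall>x\<in>{0..1}. eps * s' x + b x * s x = rho x"
    and rho: "\<forall>x\<in>{0..1}. \<bar>rho x\<bar> \<le> P * eps + R * exp (- beta * x / eps) / eps ^ k"
    and s0: "\<bar>s 0\<bar> \<le> S / eps ^ k" and P: "P \<ge> 0" and R: "R \<ge> 0"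
  shows "\<forall>x\<in>{0..1}. \<bar>s x\<bar> \<le> (P / beta + S + R / (beta1 - beta))
      * (eps + exp (- beta * x / eps) / eps ^ k)"
proof
  fix x :: real assume x: "x \<in> {0..1}"
  define E where "E = exp (- beta * x / eps)"
  have "0 \<le> S / eps ^ k" using s0 by linarith
  moreover have "eps ^ k > 0" using eps by simp
  ultimately have "S \<ge> 0" by (simp add: zero_le_divide_iff)
  have "\<forall>x\<in>{0..1}. \<bar>rho x\<bar> \<le> P * eps + R / eps ^ k * exp (- beta * x / eps)"
    using rho by simp
  from first_order_comparison_01[OF eps beta b d eq this s0] P R eps x
  have "\<bar>s x\<bar> \<le> P * eps / beta + (S / eps ^ k + R / eps ^ k / (beta1 - beta)) * E"
    unfolding E_def by simp
  also have "\<dots> = P / beta * eps + (S + R / (beta1 - beta)) * (E / eps ^ k)"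
    by (simp add: add_divide_distrib distrib_right)
  also have "\<dots> \<le> (P / beta + S + R / (beta1 - beta)) * eps
      + (P / beta + S + R / (beta1 - beta)) * (E / eps ^ k)"
    using P R beta eps \<open>S \<ge> 0\<close> by (intro add_mono mult_right_mono) (auto simp: E_def)
  finally show "\<bar>s x\<bar> \<le> (P / beta + S + R / (beta1 - beta)) * (eps + E / eps ^ k)"
    by (simp add: distrib_left)
qed

section \<open>Taylor expansion with bounded remainder\<close>

lemma deriv_on_taylor_remainder:
  fixes d :: "nat \<Rightarrow> real \<Rightarrow> real"
  assumes "deriv_on (d 0) (d 1) S"
  shows "deriv_on (\<lambda>t. d 0 t - (\<Sum>k<Suc n. d k x * (t - x) ^ k / fact k))
    (\<lambda>t. d 1 t - (\<Sum>k<n. d (Suc k) x * (t - x) ^ k / fact k)) S"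
  unfolding deriv_on_def
proof
  fix t assume t: "t \<in> S"
  have monomial: "((\<lambda>t. c * (t - x) ^ Suc k / fact (Suc k)) has_real_derivative
      c * (t - x) ^ k / fact k) (at t within S)" for c and k :: nat
    by (rule derivative_eq_intros refl | simp add: fact_Suc del: of_nat_Suc)+
  have "(d 0 has_real_derivative d 1 t) (at t within S)"
    using assms t unfolding deriv_on_def by auto
  then have "((\<lambda>t. d 0 t - d 0 x - (\<Sum>k<n. d (Suc k) x * (t - x) ^ Suc k / fact (Suc k)))
      has_real_derivative d 1 t - (\<Sum>k<n. d (Suc k) x * (t - x) ^ k / fact k)) (at t within S)"
    by (intro derivative_eq_intros monomial) auto
  moreover have "(\<lambda>t. d 0 t - (\<Sum>k<Suc n. d k x * (t - x) ^ k / fact k))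
      = (\<lambda>t. d 0 t - d 0 x - (\<Sum>k<n. d (Suc k) x * (t - x) ^ Suc k / fact (Suc k)))"
    unfolding sum.lessThan_Suc_shift by (simp add: algebra_simps)
  ultimately show "((\<lambda>t. d 0 t - (\<Sum>k<Suc n. d k x * (t - x) ^ k / fact k)) has_real_derivative
      d 1 t - (\<Sum>k<n. d (Suc k) x * (t - x) ^ k / fact k)) (at t within S)"
    by simp
qed

lemma taylor_remainder_bound:
  fixes d :: "nat \<Rightarrow> real \<Rightarrow> real"
  assumes "\<forall>m<n. deriv_on (d m) (d (Suc m)) {l..r}" "x \<in> {l..r}" "x' \<in> {l..r}"
    "\<forall>t. min x x' \<le> t \<and> t \<le> max x x' \<longrightarrow> \<bar>d n t\<bar> \<le> M"
  shows "\<bar>d 0 x' - (\<Sum>k<n. d k x * (x' - x) ^ k / fact k)\<bar> \<le> M * \<bar>x' - x\<bar> ^ n"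
  using assms
proof (induction n arbitrary: d x')
  case 0
  then show ?case by force
next
  case (Suc n)
  define phi where "phi = (\<lambda>t. d 0 t - (\<Sum>k<Suc n. d k x * (t - x) ^ k / fact k))"
  define phi' where "phi' = (\<lambda>t. d 1 t - (\<Sum>k<n. d (Suc k) x * (t - x) ^ k / fact k))"
  have "deriv_on phi phi' {l..r}"
    unfolding phi_def phi'_def using Suc.prems(1) by (intro deriv_on_taylor_remainder) simp
  moreover have "{min x x'..max x x'} \<subseteq> {l..r}" using Suc.prems(2,3) by auto
  moreover have "\<forall>t\<in>{min x x'..max x x'}. \<bar>phi' t\<bar> \<le> M * \<bar>x' - x\<bar> ^ n"
  proof
    fix t assume t: "t \<in> {min x x'..max x x'}"
    have "\<forall>s. min x t \<le> s \<and> s \<le> max x t \<longrightarrow> \<bar>d (Suc n) s\<bar> \<le> M"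
      using Suc.prems(4) t by (auto simp: min_def max_def split: if_splits)
    moreover have "t \<in> {l..r}" using t Suc.prems(2,3) by auto
    ultimately have "\<bar>phi' t\<bar> \<le> M * \<bar>t - x\<bar> ^ n"
      using Suc.IH[of "\<lambda>k. d (Suc k)" t] Suc.prems(1,2) unfolding phi'_def by auto
    also have "\<dots> \<le> M * \<bar>x' - x\<bar> ^ n"
      using t Suc.prems(4)[rule_format, of x]
      by (intro mult_left_mono power_mono) auto
    finally show "\<bar>phi' t\<bar> \<le> M * \<bar>x' - x\<bar> ^ n" .
  qed
  ultimately have "\<bar>phi (max x x') - phi (min x x')\<bar> \<le> M * \<bar>x' - x\<bar> ^ n * (max x x' - min x x')"
    by (intro deriv_on_lipschitz) auto
  moreover have "phi x = 0" unfolding phi_def sum.lessThan_Suc_shift by simp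
  ultimately have "\<bar>phi x'\<bar> \<le> M * \<bar>x' - x\<bar> ^ n * \<bar>x' - x\<bar>"
    by (cases "x \<le> x'") (auto simp: max_def min_def)
  then show ?case unfolding phi_def by (simp add: algebra_simps)
qed

lemma taylor2_remainder_bound:
  assumes "deriv_on y y1 {l..r}" "deriv_on y1 y2 {l..r}" "deriv_on y2 y3 {l..r}"
    "x \<in> {l..r}" "x' \<in> {l..r}" "\<forall>t. min x x' \<le> t \<and> t \<le> max x x' \<longrightarrow> \<bar>y3 t\<bar> \<le> M"
  shows "\<bar>y x' - (y x + y1 x * (x' - x) + y2 x * (x' - x)\<^sup>2 / 2)\<bar> \<le> M * \<bar>x' - x\<bar> ^ 3"
proof -
  have "\<forall>m<3. deriv_on ([y, y1, y2, y3] ! m) ([y, y1, y2, y3] ! Suc m) {l..r}"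
    using assms(1-3) by (auto simp: less_Suc_eq numeral_3_eq_3)
  from taylor_remainder_bound[OF this assms(4,5)] assms(6) show ?thesis
    by (simp add: eval_nat_numeral algebra_simps)
qed

lemma taylor3_remainder_bound:
  assumes "deriv_on y y1 {l..r}" "deriv_on y1 y2 {l..r}" "deriv_on y2 y3 {l..r}"
    "deriv_on y3 y4 {l..r}"
    "x \<in> {l..r}" "x' \<in> {l..r}" "\<forall>t. min x x' \<le> t \<and> t \<le> max x x' \<longrightarrow> \<bar>y4 t\<bar> \<le> M"
  shows "\<bar>y x' - (y x + y1 x * (x' - x) + y2 x * (x' - x)\<^sup>2 / 2 + y3 x * (x' - x) ^ 3 / 6)\<bar>
    \<le> M * \<bar>x' - x\<bar> ^ 4"
proof -
  have "\<forall>m<4. deriv_on ([y, y1, y2, y3, y4] ! m) ([y, y1, y2, y3, y4] ! Suc m) {l..r}"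
    using assms(1-4) by (auto simp: less_Suc_eq numeral_eq_Suc)
  from taylor_remainder_bound[OF this assms(5,6)] assms(7) show ?thesis
    by (simp add: eval_nat_numeral fact_numeral algebra_simps)
qed

lemma forward_difference_error:
  assumes "deriv_on y y1 {l..r}" "deriv_on y1 y2 {l..r}" "deriv_on y2 y3 {l..r}"
    "l \<le> x0" "x0 + H \<le> r" "H > 0" "\<forall>t. x0 \<le> t \<and> t \<le> x0 + H \<longrightarrow> \<bar>y3 t\<bar> \<le> M3"
  shows "\<bar>(y (x0 + H) - y x0) / H - y1 x0 - H / 2 * y2 x0\<bar> \<le> M3 * H\<^sup>2"
proof -
  have "\<bar>y (x0 + H) - (y x0 + y1 x0 * H + y2 x0 * H\<^sup>2 / 2)\<bar> \<le> M3 * H ^ 3"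
    using taylor2_remainder_bound[OF assms(1-3), of x0 "x0 + H" M3] assms(4-7) by auto
  moreover have "(y (x0 + H) - y x0) / H - y1 x0 - H / 2 * y2 x0
      = (y (x0 + H) - (y x0 + y1 x0 * H + y2 x0 * H\<^sup>2 / 2)) / H"
    using assms(6) by (simp add: field_simps power2_eq_square)
  ultimately show ?thesis
    using assms(6) by (simp add: abs_divide divide_le_eq power2_eq_square power3_eq_cube mult.assoc)
qed

lemma second_difference_error:
  assumes "deriv_on y y1 {l..r}" "deriv_on y1 y2 {l..r}" "deriv_on y2 y3 {l..r}"
    "l \<le> x0 - h" "x0 + H \<le> r" "h > 0" "H > 0"
    "\<forall>t. x0 - h \<le> t \<and> t \<le> x0 + H \<longrightarrow> \<bar>y3 t\<bar> \<le> M3"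
  shows "\<bar>((y (x0 + H) - y x0) / H - (y x0 - y (x0 - h)) / h) / ((h + H) / 2) - y2 x0\<bar>
    \<le> 2 * M3 * (H + h)"
proof -
  define Rp where "Rp = y (x0 + H) - (y x0 + y1 x0 * H + y2 x0 * H\<^sup>2 / 2)"
  define Rm where "Rm = y (x0 - h) - (y x0 - y1 x0 * h + y2 x0 * h\<^sup>2 / 2)"
  have "\<bar>Rp\<bar> \<le> M3 * H ^ 3"
    using taylor2_remainder_bound[OF assms(1-3), of x0 "x0 + H" M3] assms(4-8)
    unfolding Rp_def by auto
  then have Rp: "\<bar>Rp / H\<bar> \<le> M3 * H\<^sup>2"
    using assms(7) by (simp add: abs_divide divide_le_eq power2_eq_square power3_eq_cube mult.assoc)
  have "\<bar>Rm\<bar> \<le> M3 * h ^ 3"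
    using taylor2_remainder_bound[OF assms(1-3), of x0 "x0 - h" M3] assms(4-8)
    unfolding Rm_def by auto
  then have Rm: "\<bar>Rm / h\<bar> \<le> M3 * h\<^sup>2"
    using assms(6) by (simp add: abs_divide divide_le_eq power2_eq_square power3_eq_cube mult.assoc)
  have "M3 \<ge> 0" using assms(8)[rule_format, of x0] assms(6,7) by force
  have "\<bar>Rp / H + Rm / h\<bar> \<le> M3 * H\<^sup>2 + M3 * h\<^sup>2"
    using Rp Rm abs_triangle_ineq[of "Rp / H" "Rm / h"] by linarith
  also have "\<dots> \<le> M3 * (H + h)\<^sup>2"
  proof -
    have "M3 * (H + h)\<^sup>2 = M3 * H\<^sup>2 + M3 * h\<^sup>2 + 2 * (M3 * (H * h))"
      by (simp add: power2_eq_square algebra_simps)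
    moreover have "M3 * (H * h) \<ge> 0" using \<open>M3 \<ge> 0\<close> assms(6,7) by simp
    ultimately show ?thesis by linarith
  qed
  finally have "\<bar>Rp / H + Rm / h\<bar> / ((h + H) / 2) \<le> M3 * (H + h)\<^sup>2 / ((h + H) / 2)"
    using assms(6,7) by (intro divide_right_mono) auto
  also have "\<dots> = 2 * M3 * (H + h)"
    using assms(6,7) by (simp add: power2_eq_square field_simps)
  finally have "\<bar>Rp / H + Rm / h\<bar> / ((h + H) / 2) \<le> 2 * M3 * (H + h)" .
  moreover have "\<bar>Rp / H + Rm / h\<bar> / ((h + H) / 2) = \<bar>(Rp / H + Rm / h) / ((h + H) / 2)\<bar>"
    using assms(6,7) by (intro abs_div_pos) simp
  ultimately have bound: "\<bar>(Rp / H + Rm / h) / ((h + H) / 2)\<bar> \<le> 2 * M3 * (H + h)"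
    by linarith
  have "(y (x0 + H) - y x0) / H - (y x0 - y (x0 - h)) / h = (h + H) / 2 * y2 x0 + (Rp / H + Rm / h)"
    unfolding Rp_def Rm_def using assms(6,7) by (simp add: field_simps power2_eq_square)
  then have "((y (x0 + H) - y x0) / H - (y x0 - y (x0 - h)) / h) / ((h + H) / 2) - y2 x0
      = (Rp / H + Rm / h) / ((h + H) / 2)"
    using assms(6,7) by (simp add: add_divide_distrib)
  with bound show ?thesis by simp
qed

lemma central_second_difference_error:
  assumes "deriv_on y y1 {l..r}" "deriv_on y1 y2 {l..r}" "deriv_on y2 y3 {l..r}"
    "deriv_on y3 y4 {l..r}" "l \<le> x0 - h" "x0 + h \<le> r" "h > 0"
    "\<forall>t. x0 - h \<le> t \<and> t \<le> x0 + h \<longrightarrow> \<bar>y4 t\<bar> \<le> M4"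
  shows "\<bar>((y (x0 + h) - y x0) / h - (y x0 - y (x0 - h)) / h) / ((h + h) / 2) - y2 x0\<bar>
    \<le> 2 * M4 * h\<^sup>2"
proof -
  define Rp where
    "Rp = y (x0 + h) - (y x0 + y1 x0 * h + y2 x0 * h\<^sup>2 / 2 + y3 x0 * h ^ 3 / 6)"
  define Rm where
    "Rm = y (x0 - h) - (y x0 - y1 x0 * h + y2 x0 * h\<^sup>2 / 2 - y3 x0 * h ^ 3 / 6)"
  have "\<bar>Rp\<bar> \<le> M4 * h ^ 4"
    using taylor3_remainder_bound[OF assms(1-4), of x0 "x0 + h" M4] assms(5-8)
    unfolding Rp_def by auto
  moreover have "\<bar>Rm\<bar> \<le> M4 * h ^ 4"
    using taylor3_remainder_bound[OF assms(1-4), of x0 "x0 - h" M4] assms(5-8)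
    unfolding Rm_def by (auto simp: power3_eq_cube)
  ultimately have "\<bar>Rp + Rm\<bar> \<le> 2 * M4 * h\<^sup>2 * h\<^sup>2"
    by (simp add: abs_triangle_ineq[THEN order_trans] eval_nat_numeral)
  moreover have "((y (x0 + h) - y x0) / h - (y x0 - y (x0 - h)) / h) / ((h + h) / 2) - y2 x0
      = (Rp + Rm) / h\<^sup>2"
    unfolding Rp_def Rm_def using assms(7)
      by (simp add: field_simps power2_eq_square power3_eq_cube)
  ultimately show ?thesis
    using assms(7) by (simp add: abs_divide divide_le_eq)
qed

section \<open>The fitting factor sigma\<close>

lemma sigma_pos_le_1:
  assumes "r > 0"
  shows "0 < sigma r" "sigma r \<le> 1"
proof -
  have e: "exp (2 * r) - 1 \<ge> 2 * r" using exp_ge_add_one_self[of "2 * r"] by linarith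
  have s: "sigma r = 2 * r / (exp (2 * r) - 1)" using assms by (simp add: sigma_def)
  show "0 < sigma r" unfolding s using e assms by simp
  show "sigma r \<le> 1" unfolding s using e assms by (simp add: divide_le_eq)
qed

lemma sigma_expansion_error:
  assumes "r > 0"
  shows "\<bar>1 - sigma r - r\<bar> \<le> 8 * r\<^sup>2"
proof (cases "r \<ge> 1")
  case True
  have "\<bar>1 - sigma r - r\<bar> \<le> r" using sigma_pos_le_1[OF assms] True by linarith
  also have "r \<le> 8 * r\<^sup>2" using True by (simp add: power2_eq_square)
  finally show ?thesis .
next
  case False
  define s where "s = 2 * r"
  have s: "0 < s" "s < 2" using assms False by (auto simp: s_def)
  obtain t where t: "\<bar>t\<bar> \<le> \<bar>s\<bar>" "exp s = (\<Sum>m<3. s ^ m / fact m) + exp t / fact 3 * s ^ 3"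
    using Maclaurin_exp_le[of s 3] by blast
  define R where "R = exp t / 6 * s ^ 3"
  have ex: "exp s = 1 + s + s\<^sup>2 / 2 + R" using t(2)
    by (simp add: R_def eval_nat_numeral fact_numeral power2_eq_square)
  have "exp t \<le> exp 1 * exp 1"
    using t s by (simp flip: exp_add)
  also have "\<dots> \<le> 3 * 3" using exp_le by (intro mult_mono) auto
  finally have R: "0 \<le> R" "R \<le> 3 / 2 * s ^ 3"
    using s unfolding R_def by (auto intro!: mult_right_mono)
  define Nn where "Nn = (1 - s / 2) * (exp s - 1) - s"
  have Nn: "Nn = R * (1 - s / 2) - s ^ 3 / 4" unfolding Nn_def ex
    by (simp add: field_simps power2_eq_square power3_eq_cube)
  have "0 \<le> R * (1 - s / 2)" "R * (1 - s / 2) \<le> R" using R s by (auto simp: mult_left_le)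
  moreover have "s ^ 3 > 0" using s by simp
  ultimately have NnB: "\<bar>Nn\<bar> \<le> 2 * s ^ 3" unfolding Nn abs_le_iff using R by linarith
  have e: "exp s - 1 \<ge> s" using exp_ge_add_one_self[of s] by linarith
  have "1 - sigma r - r = Nn / (exp s - 1)"
    using e s assms unfolding Nn_def by (simp add: sigma_def s_def field_simps)
  then have "\<bar>1 - sigma r - r\<bar> = \<bar>Nn\<bar> / (exp s - 1)" using e s by simp
  also have "\<dots> \<le> \<bar>Nn\<bar> / s" using e s by (intro divide_left_mono) auto
  also have "\<dots> \<le> 2 * s ^ 3 / s" using NnB s by (intro divide_right_mono) auto
  also have "\<dots> = 8 * r\<^sup>2" using s by (simp add: s_def power2_eq_square power3_eq_cube)
  finally show ?thesis .
qed

text \<open>For \<open>H \<le> eps\<close> the defect is quadratic in \<open>H / eps\<close>; otherwise it is at most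
  \<open>1 + r\<close>, and the factor \<open>eps\<^sup>2\<close> is traded for \<open>eps H\<close>.\<close>

lemma sigma_defect_bound:
  assumes "0 < eps" "0 < bx" "bx \<le> Bm" "0 < H" "H \<le> 1"
  shows "eps\<^sup>2 * \<bar>1 - sigma (bx * H / (2 * eps)) - bx * H / (2 * eps)\<bar>
    \<le> (2 * Bm\<^sup>2 + 1 + Bm) * H * min eps H"
proof -
  define r where "r = bx * H / (2 * eps)"
  have r: "r > 0" using assms by (simp add: r_def)
  show ?thesis unfolding r_def[symmetric]
  proof (cases "eps \<ge> H")
    case True
    have "eps\<^sup>2 * \<bar>1 - sigma r - r\<bar> \<le> eps\<^sup>2 * (8 * r\<^sup>2)"
      using sigma_expansion_error[OF r] by (intro mult_left_mono) auto
    also have "\<dots> = 2 * bx\<^sup>2 * H\<^sup>2" using assms by (simp add: r_def field_simps power2_eq_square)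
    also have "\<dots> \<le> 2 * Bm\<^sup>2 * H\<^sup>2" using assms
      by (intro mult_right_mono mult_left_mono power_mono) auto
    also have "\<dots> \<le> (2 * Bm\<^sup>2 + 1 + Bm) * H * min eps H"
      using True assms by (simp add: min_def power2_eq_square mult_right_mono)
    finally show "eps\<^sup>2 * \<bar>1 - sigma r - r\<bar> \<le> (2 * Bm\<^sup>2 + 1 + Bm) * H * min eps H" .
  next
    case False
    have "\<bar>1 - sigma r - r\<bar> \<le> 1 + r" using sigma_pos_le_1[OF r] r by linarith
    then have "eps\<^sup>2 * \<bar>1 - sigma r - r\<bar> \<le> eps\<^sup>2 * (1 + r)" by (intro mult_left_mono) auto
    also have "\<dots> = eps * eps + eps * (bx * H / 2)" using assms
      by (simp add: r_def field_simps power2_eq_square)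
    also have "\<dots> \<le> eps * H + eps * (Bm * H)"
      using False assms by (intro add_mono mult_left_mono) auto
    also have "\<dots> \<le> (2 * Bm\<^sup>2 + 1 + Bm) * H * eps"
      using assms by (simp add: algebra_simps)
    finally show "eps\<^sup>2 * \<bar>1 - sigma r - r\<bar> \<le> (2 * Bm\<^sup>2 + 1 + Bm) * H * min eps H"
      using False by (simp add: min_def)
  qed
qed

section \<open>Local truncation error of the ASI scheme\<close>

lemma asi_local_error_bound:
  fixes eps bx h D2 Dp d1 d2 :: real
  assumes "eps > 0" "bx > 0" "h > 0"
    and "\<bar>d2\<bar> \<le> M2" "\<bar>D2 - d2\<bar> \<le> E2" "\<bar>Dp - d1 - h / 2 * d2\<bar> \<le> E1"
  defines "r \<equiv> bx * h / (2 * eps)"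
  shows "\<bar>- eps * sigma r * D2 - bx * Dp + eps * d2 + bx * d1\<bar>
    \<le> eps * \<bar>1 - sigma r - r\<bar> * M2 + eps * sigma r * E2 + bx * E1"
proof -
  have r: "r > 0" using assms unfolding r_def by simp
  have "bx * (h / 2) = eps * r" using assms(1) unfolding r_def by (simp add: field_simps)
  then have "- eps * sigma r * D2 - bx * Dp + eps * d2 + bx * d1
      = eps * (1 - sigma r - r) * d2 - eps * sigma r * (D2 - d2) - bx * (Dp - d1 - h / 2 * d2)"
    by (simp add: algebra_simps)
  moreover have "\<bar>eps * (1 - sigma r - r) * d2\<bar> \<le> eps * \<bar>1 - sigma r - r\<bar> * M2"
    using assms(1,4) by (simp add: abs_mult mult_left_mono)
  moreover have "\<bar>eps * sigma r * (D2 - d2)\<bar> \<le> eps * sigma r * E2"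
    using assms(1,5) sigma_pos_le_1[OF r] by (simp add: abs_mult mult_left_mono)
  moreover have "\<bar>bx * (Dp - d1 - h / 2 * d2)\<bar> \<le> bx * E1"
    using assms(2,6) by (simp add: abs_mult mult_left_mono)
  ultimately show ?thesis by linarith
qed

lemma tau_at_mesh_point:
  assumes "1 \<le> i" "X (i + 1) = X i + hp" "X (i - 1) = X i - hm"
  shows "tau eps b X y y1 y2 i = - eps * sigma (b (X i) * hp / (2 * eps)) *
     (((y (X i + hp) - y (X i)) / hp - (y (X i) - y (X i - hm)) / hm) / ((hm + hp) / 2))
     - b (X i) * ((y (X i + hp) - y (X i)) / hp) + eps * y2 (X i) + b (X i) * y1 (X i)"
proof -
  have "hstep X (i + 1) = hp" "hstep X i = hm" using assms by (simp_all add: hstep_def)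
  then show ?thesis unfolding tau_def rho_def D2_def Dplus_def Dminus_def hbar_def
    using assms by simp
qed

lemma tau_uniform_bound:
  assumes d: "deriv_on y y1 {0..1}" "deriv_on y1 y2 {0..1}" "deriv_on y2 y3 {0..1}"
      "deriv_on y3 y4 {0..1}"
    and i: "1 \<le> i" "X (i + 1) = X i + h" "X (i - 1) = X i - h"
    and x: "0 \<le> X i - h" "X i + h \<le> 1" "h > 0" and eps: "eps > 0" and b: "b (X i) > 0"
    and M2: "\<bar>y2 (X i)\<bar> \<le> M2"
    and M34: "\<forall>t. X i - h \<le> t \<and> t \<le> X i + h \<longrightarrow> \<bar>y3 t\<bar> \<le> M3 \<and> \<bar>y4 t\<bar> \<le> M4"
  defines "r \<equiv> b (X i) * h / (2 * eps)"
  shows "\<bar>tau eps b X y y1 y2 i\<bar>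
    \<le> eps * \<bar>1 - sigma r - r\<bar> * M2 + eps * sigma r * (2 * M4 * h\<^sup>2) + b (X i) * (M3 * h\<^sup>2)"
  unfolding tau_at_mesh_point[OF i] r_def
proof (rule asi_local_error_bound[OF eps b x(3) M2])
  show "\<bar>((y (X i + h) - y (X i)) / h - (y (X i) - y (X i - h)) / h) / ((h + h) / 2) - y2 (X i)\<bar>
      \<le> 2 * M4 * h\<^sup>2"
    using central_second_difference_error[OF d x] M34 by blast
  show "\<bar>(y (X i + h) - y (X i)) / h - y1 (X i) - h / 2 * y2 (X i)\<bar> \<le> M3 * h\<^sup>2"
    using forward_difference_error[OF d(1-3), of "X i" h] x M34 by auto
qed

lemma tau_nonuniform_bound:
  assumes d: "deriv_on y y1 {0..1}" "deriv_on y1 y2 {0..1}" "deriv_on y2 y3 {0..1}"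
    and i: "1 \<le> i" "X (i + 1) = X i + H" "X (i - 1) = X i - h"
    and x: "0 \<le> X i - h" "X i + H \<le> 1" "h > 0" "H > 0" and eps: "eps > 0" and b: "b (X i) > 0"
    and M2: "\<bar>y2 (X i)\<bar> \<le> M2"
    and M3: "\<forall>t. X i - h \<le> t \<and> t \<le> X i + H \<longrightarrow> \<bar>y3 t\<bar> \<le> M3"
  defines "r \<equiv> b (X i) * H / (2 * eps)"
  shows "\<bar>tau eps b X y y1 y2 i\<bar>
    \<le> eps * \<bar>1 - sigma r - r\<bar> * M2 + eps * sigma r * (2 * M3 * (H + h)) + b (X i) * (M3 * H\<^sup>2)"
  unfolding tau_at_mesh_point[OF i] r_def
proof (rule asi_local_error_bound[OF eps b x(4) M2])
  show "\<bar>((y (X i + H) - y (X i)) / H - (y (X i) - y (X i - h)) / h) / ((h + H) / 2) - y2 (X i)\<bar>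
      \<le> 2 * M3 * (H + h)"
    using second_difference_error[OF d x] M3 by blast
  show "\<bar>(y (X i + H) - y (X i)) / H - y1 (X i) - H / 2 * y2 (X i)\<bar> \<le> M3 * H\<^sup>2"
    using forward_difference_error[OF d, of "X i" H] x M3 by auto
qed

fun smooth_on :: "nat \<Rightarrow> real set \<Rightarrow> (real \<Rightarrow> real) \<Rightarrow> bool" where
  "smooth_on 0 S g = continuous_on S g"
| "smooth_on (Suc k) S g = (\<exists>g'. deriv_on g g' S \<and> smooth_on k S g')"

lemma smooth_on_continuous_on: "smooth_on k S g \<Longrightarrow> continuous_on S g"
  by (cases k) (auto intro: deriv_on_continuous_on)

lemma smooth_on_cong: "smooth_on k S g \<Longrightarrow> \<forall>x\<in>S. g x = h x \<Longrightarrow> smooth_on k S h"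
proof (induction k arbitrary: g h)
  case 0
  then show ?case using continuous_on_cong by (metis smooth_on.simps(1))
next
  case (Suc k)
  then obtain g' where "deriv_on g g' S" "smooth_on k S g'" by auto
  then show ?case using deriv_on_cong[of g g' S h g'] Suc.prems by auto
qed

lemma smooth_on_Suc_imp: "smooth_on (Suc k) S g \<Longrightarrow> smooth_on k S g"
proof (induction k arbitrary: g)
  case 0
  then show ?case by (auto intro: deriv_on_continuous_on)
next
  case (Suc k)
  then obtain g' where "deriv_on g g' S" "smooth_on (Suc k) S g'" by auto
  then show ?case using Suc.IH by auto
qed

lemma smooth_on_le: "smooth_on k S g \<Longrightarrow> j \<le> k \<Longrightarrow> smooth_on j S g"
proof (induction k)
  case (Suc k)
  then show ?case using smooth_on_Suc_imp by (cases "j = Suc k") auto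
qed simp

lemma smooth_on_const: "smooth_on k S (\<lambda>x. c)"
proof (induction k arbitrary: c)
  case (Suc k)
  have "deriv_on (\<lambda>x. c) (\<lambda>x. 0) S" unfolding deriv_on_def by (auto intro!: derivative_eq_intros)
  then show ?case using Suc.IH by auto
qed simp

lemma smooth_on_add: "smooth_on k S f \<Longrightarrow> smooth_on k S g \<Longrightarrow> smooth_on k S (\<lambda>x. f x + g x)"
proof (induction k arbitrary: f g)
  case (Suc k)
  obtain f' g' where "deriv_on f f' S" "smooth_on k S f'" "deriv_on g g' S" "smooth_on k S g'"
    using Suc.prems by auto
  moreover have "deriv_on (\<lambda>x. f x + g x) (\<lambda>x. f' x + g' x) S"
    using \<open>deriv_on f f' S\<close> \<open>deriv_on g g' S\<close> unfolding deriv_on_def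
    by (auto intro!: derivative_eq_intros)
  ultimately show ?case using Suc.IH by auto
qed (auto intro: continuous_intros)

lemma smooth_on_mult: "smooth_on k S f \<Longrightarrow> smooth_on k S g \<Longrightarrow> smooth_on k S (\<lambda>x. f x * g x)"
proof (induction k arbitrary: f g)
  case (Suc k)
  obtain f' g' where fg: "deriv_on f f' S" "smooth_on k S f'" "deriv_on g g' S" "smooth_on k S g'"
    using Suc.prems by auto
  have "smooth_on k S f" "smooth_on k S g" using Suc.prems smooth_on_Suc_imp by auto
  then have "smooth_on k S (\<lambda>x. f' x * g x + f x * g' x)" using Suc.IH smooth_on_add fg by auto
  moreover have "deriv_on (\<lambda>x. f x * g x) (\<lambda>x. f' x * g x + f x * g' x) S"
    using fg unfolding deriv_on_def by (auto intro!: derivative_eq_intros)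
  ultimately show ?case by auto
qed (auto intro: continuous_intros)

lemma smooth_on_diff: "smooth_on k S f \<Longrightarrow> smooth_on k S g \<Longrightarrow> smooth_on k S (\<lambda>x. f x - g x)"
  using smooth_on_add[of k S f "\<lambda>x. (-1) * g x"] smooth_on_mult[OF smooth_on_const, of k S g "-1"]
  by simp

lemma smooth_on_inverse:
  "smooth_on k S f \<Longrightarrow> \<forall>x\<in>S. f x \<noteq> 0 \<Longrightarrow> smooth_on k S (\<lambda>x. 1 / f x)"
proof (induction k arbitrary: f)
  case (Suc k)
  obtain f' where f: "deriv_on f f' S" "smooth_on k S f'" using Suc.prems by auto
  have inv: "smooth_on k S (\<lambda>x. 1 / f x)" using Suc smooth_on_Suc_imp by blast
  have "smooth_on k S (\<lambda>x. (-1) * f' x * (1 / f x * (1 / f x)))"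
    using smooth_on_mult[OF smooth_on_mult[OF smooth_on_const[of k S "-1"] f(2)]
        smooth_on_mult[OF inv inv]] by simp
  moreover have "deriv_on (\<lambda>x. 1 / f x) (\<lambda>x. (-1) * f' x * (1 / f x * (1 / f x))) S"
    using f(1) Suc.prems(2) unfolding deriv_on_def
    by (auto intro!: derivative_eq_intros simp: power2_eq_square field_simps)
  ultimately show ?case by auto
qed (auto intro!: continuous_intros)

lemma smooth_on_divide:
  "smooth_on k S f \<Longrightarrow> smooth_on k S g \<Longrightarrow> \<forall>x\<in>S. g x \<noteq> 0 \<Longrightarrow> smooth_on k S (\<lambda>x. f x / g x)"
  using smooth_on_mult[OF _ smooth_on_inverse, of k S f g] by simp

lemma Ck_on_imp_smooth_on:
  assumes "Ck_on k S g"
  shows "smooth_on k S g"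
proof -
  obtain D where D: "\<forall>x\<in>S. D 0 x = g x"
    "\<forall>j<k. \<forall>x\<in>S. (D j has_real_derivative D (Suc j) x) (at x within S)"
    "\<forall>j\<le>k. continuous_on S (D j)"
    using assms unfolding Ck_on_def by blast
  have "m \<le> k \<Longrightarrow> smooth_on m S (D (k - m))" for m
  proof (induction m)
    case (Suc m)
    have "deriv_on (D (k - Suc m)) (D (k - m)) S"
      using D(2)[rule_format, of "k - Suc m"] Suc.prems unfolding deriv_on_def
      by (simp add: Suc_diff_Suc)
    then show ?case using Suc by auto
  qed (use D(3) in simp)
  then have "smooth_on k S (D 0)" by (metis diff_self_eq_0 order_refl)
  then show ?thesis using smooth_on_cong D(1) by blast
qed

lemma smooth_on_derivs:
  "smooth_on k S g \<Longrightarrow>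
    \<exists>D. D 0 = g \<and> (\<forall>j<k. deriv_on (D j) (D (Suc j)) S) \<and> (\<forall>j\<le>k. continuous_on S (D j))"
proof (induction k arbitrary: g)
  case 0
  then show ?case by (intro exI[of _ "\<lambda>j. g"]) auto
next
  case (Suc k)
  obtain g' where g: "deriv_on g g' S" "smooth_on k S g'" using Suc.prems by auto
  obtain D where D: "D 0 = g'" "\<forall>j<k. deriv_on (D j) (D (Suc j)) S"
    "\<forall>j\<le>k. continuous_on S (D j)"
    using Suc.IH[OF g(2)] by blast
  define E where "E = (\<lambda>j. if j = 0 then g else D (j - 1))"
  have "\<forall>j<Suc k. deriv_on (E j) (E (Suc j)) S"
  proof (intro allI impI)
    fix j assume "j < Suc k"
    then show "deriv_on (E j) (E (Suc j)) S" using g D by (cases j) (auto simp: E_def)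
  qed
  moreover have "\<forall>j\<le>Suc k. continuous_on S (E j)"
  proof (intro allI impI)
    fix j assume "j \<le> Suc k"
    then show "continuous_on S (E j)"
      using g D deriv_on_continuous_on by (cases j) (auto simp: E_def)
  qed
  ultimately show ?case by (intro exI[of _ E]) (auto simp: E_def)
qed

lemma continuous_on_abs_bounded:
  fixes f :: "real \<Rightarrow> real"
  assumes "continuous_on S f" "compact S"
  shows "\<exists>M>0. \<forall>x\<in>S. \<bar>f x\<bar> \<le> M"
  using compact_imp_bounded[OF compact_continuous_image[OF assms]]
  by (fastforce simp: bounded_pos)

lemma smooth_on_derivs_bounded:
  assumes "smooth_on k S g" "compact S"
  shows "\<exists>D M. D 0 = g \<and> (\<forall>j<k. deriv_on (D j) (D (Suc j)) S) \<and> (\<forall>j\<le>k. \<forall>x\<in>S. \<bar>D j x\<bar> \<le> M)"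
proof -
  obtain D where D: "D 0 = g" "\<forall>j<k. deriv_on (D j) (D (Suc j)) S" "\<forall>j\<le>k. continuous_on S (D j)"
    using smooth_on_derivs[OF assms(1)] by blast
  have "continuous_on S (\<lambda>x. \<Sum>j\<le>k. \<bar>D j x\<bar>)"
    using D(3) by (intro continuous_intros) auto
  then obtain M where M: "\<forall>x\<in>S. \<bar>\<Sum>j\<le>k. \<bar>D j x\<bar>\<bar> \<le> M"
    using continuous_on_abs_bounded assms(2) by blast
  have "\<bar>D j x\<bar> \<le> M" if "j \<le> k" "x \<in> S" for j x
  proof -
    have "\<bar>D j x\<bar> \<le> (\<Sum>j\<le>k. \<bar>D j x\<bar>)" using that by (intro member_le_sum) auto
    then show ?thesis using M that by force
  qed
  then show ?thesis using D by blast
qed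

section \<open>The reduced problem\<close>

lemma continuous_on_eq_01:
  fixes p q :: "real \<Rightarrow> real"
  assumes "continuous_on {0..1} p" "continuous_on {0..1} q" "\<forall>x\<in>{0<..<1}. p x = q x"
  shows "\<forall>x\<in>{0..1}. p x = q x"
proof -
  have "closed {x \<in> {0..1}. p x - q x = 0}"
    by (intro continuous_closed_preimage_constant continuous_intros assms)
  moreover have "{0<..<1} \<subseteq> {x \<in> {0..1}. p x - q x = 0}" using assms(3) by auto
  ultimately have "closure {0<..<1::real} \<subseteq> {x \<in> {0..1}. p x - q x = 0}"
    using closure_minimal by blast
  then show ?thesis by auto
qed

lemma reduced_solution_deriv_eq:
  fixes b c f u0 du0 :: "real \<Rightarrow> real"
  assumes "continuous_on {0..1} b" "continuous_on {0..1} c" "continuous_on {0..1} f"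
    "\<forall>x\<in>{0..1}. b x \<noteq> 0" "deriv_on u0 du0 {0..1}" "continuous_on {0..1} du0"
    "\<forall>x\<in>{0<..<1}. - b x * du0 x + c x * u0 x = f x"
  shows "\<forall>x\<in>{0..1}. du0 x = (c x * u0 x - f x) / b x"
proof (rule continuous_on_eq_01[OF assms(6)])
  show "continuous_on {0..1} (\<lambda>x. (c x * u0 x - f x) / b x)"
    using assms(1-4) deriv_on_continuous_on[OF assms(5)] by (intro continuous_intros) auto
  show "\<forall>x\<in>{0<..<1}. du0 x = (c x * u0 x - f x) / b x"
    using assms(4,7) by (auto simp: field_simps)
qed

lemma reduced_solution_smooth:
  fixes b c f u0 du0 :: "real \<Rightarrow> real"
  assumes "smooth_on k {0..1} b" "smooth_on k {0..1} c" "smooth_on k {0..1} f"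
    "\<forall>x\<in>{0..1}. b x \<noteq> 0" "deriv_on u0 du0 {0..1}" "continuous_on {0..1} du0"
    "\<forall>x\<in>{0<..<1}. - b x * du0 x + c x * u0 x = f x"
  shows "smooth_on (Suc k) {0..1} u0"
proof -
  have du0: "\<forall>x\<in>{0..1}. (c x * u0 x - f x) / b x = du0 x"
    using reduced_solution_deriv_eq[OF assms(1-3)[THEN smooth_on_continuous_on] assms(4-7)]
    by simp
  have "m \<le> Suc k \<Longrightarrow> smooth_on m {0..1} u0" for m
  proof (induction m)
    case (Suc m)
    then have "smooth_on m {0..1} (\<lambda>x. (c x * u0 x - f x) / b x)"
      using smooth_on_le[OF assms(1)] smooth_on_le[OF assms(2)] smooth_on_le[OF assms(3)] assms(4)
      by (intro smooth_on_divide smooth_on_diff smooth_on_mult) auto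
    then have "smooth_on m {0..1} du0" using smooth_on_cong du0 by blast
    then show ?case using assms(5) by auto
  qed (simp add: deriv_on_continuous_on[OF assms(5)])
  then show ?thesis by (metis order_refl)
qed

text \<open>The barrier \<open>dl (2 - x)\<close> with arbitrarily small \<open>dl > 0\<close> squeezes a solution of the
  homogeneous reduced problem to zero.\<close>

lemma reduced_homogeneous_solution_zero:
  fixes b c v v' v'' :: "real \<Rightarrow> real"
  assumes b: "\<forall>x\<in>{0..1}. b x > 0" and c: "\<forall>x\<in>{0..1}. c x \<ge> 0"
    and d: "deriv_on v v' {0..1}" "deriv_on v' v'' {0..1}"
    and Lv: "\<forall>x\<in>{0..1}. - b x * v' x + c x * v x = 0" and v1: "v 1 = 0"
  shows "\<forall>x\<in>{0..1}. v x = 0"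
proof -
  have bound: "\<bar>v x\<bar> \<le> dl * (2 - x)" if dl: "dl > 0" and x: "x \<in> {0..1}" for dl x
  proof -
    have "\<forall>x\<in>{0..1}. \<bar>v x\<bar> \<le> dl * (2 - x)"
    proof (rule barrier_bound_01[where eps = 0 and p' = "\<lambda>x. - dl" and p'' = "\<lambda>x. 0", OF _ d _ _ c])
      show "deriv_on (\<lambda>x. dl * (2 - x)) (\<lambda>x. - dl) {0..1}" "deriv_on (\<lambda>x. - dl) (\<lambda>x. 0) {0..1}"
        unfolding deriv_on_def by (auto intro!: derivative_eq_intros)
      show "\<forall>x\<in>{0<..<1}. \<bar>- 0 * v'' x - b x * v' x + c x * v x\<bar>
          < - 0 * 0 - b x * - dl + c x * (dl * (2 - x))"
      proof
        fix x :: real assume x: "x \<in> {0<..<1}"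
        then have "b x * dl > 0" "c x * (dl * (2 - x)) \<ge> 0" "- b x * v' x + c x * v x = 0"
          using b c dl Lv by auto
        then show "\<bar>- 0 * v'' x - b x * v' x + c x * v x\<bar>
            < - 0 * 0 - b x * - dl + c x * (dl * (2 - x))"
          by simp
      qed
      show "\<bar>v 1\<bar> \<le> dl * (2 - 1)" using v1 dl by simp
      show "- dl < sg * v' 0" if "sg = 1 \<or> sg = -1" "dl * (2 - 0) < sg * v 0" for sg
      proof -
        have "b 0 > 0" "c 0 \<ge> 0" "b 0 * v' 0 = c 0 * v 0" using b c Lv by auto
        then have "sg * v' 0 = c 0 * (sg * v 0) / b 0" by (simp add: field_simps)
        also have "\<dots> \<ge> 0" using that dl \<open>b 0 > 0\<close> \<open>c 0 \<ge> 0\<close> by auto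
        finally show ?thesis using dl by linarith
      qed
    qed simp
    then show ?thesis using x by blast
  qed
  show ?thesis
  proof (rule ballI, rule ccontr)
    fix x :: real assume x: "x \<in> {0..1}" and "v x \<noteq> 0"
    then have "\<bar>v x\<bar> \<le> \<bar>v x\<bar> / 4 * (2 - x)" using bound[of "\<bar>v x\<bar> / 4" x] by auto
    also have "\<dots> \<le> \<bar>v x\<bar> / 4 * 2" using x by (intro mult_left_mono) auto
    finally show False using \<open>v x \<noteq> 0\<close> by simp
  qed
qed

lemma reduced_solution_unique:
  fixes b c f u0 du0 ddu0 w0 dw0 ddw0 :: "real \<Rightarrow> real"
  assumes cont: "continuous_on {0..1} b" "continuous_on {0..1} c" "continuous_on {0..1} f"
    and b: "\<forall>x\<in>{0..1}. b x > 0" and c: "\<forall>x\<in>{0..1}. c x \<ge> 0"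
    and u0: "deriv_on u0 du0 {0..1}" "deriv_on du0 ddu0 {0..1}"
      "\<forall>x\<in>{0<..<1}. - b x * du0 x + c x * u0 x = f x" "u0 1 = 0"
    and w0: "deriv_on w0 dw0 {0..1}" "deriv_on dw0 ddw0 {0..1}"
      "\<forall>x\<in>{0<..<1}. - b x * dw0 x + c x * w0 x = f x" "w0 1 = 0"
  shows "\<forall>x\<in>{0..1}. u0 x = w0 x"
proof -
  have b0: "\<forall>x\<in>{0..1}. b x \<noteq> 0" using b by force
  have "\<forall>x\<in>{0..1}. du0 x = (c x * u0 x - f x) / b x" "\<forall>x\<in>{0..1}. dw0 x = (c x * w0 x - f x) / b x"
    using reduced_solution_deriv_eq[OF cont b0 u0(1) deriv_on_continuous_on[OF u0(2)] u0(3)]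
      reduced_solution_deriv_eq[OF cont b0 w0(1) deriv_on_continuous_on[OF w0(2)] w0(3)] by auto
  then have Lv: "\<forall>x\<in>{0..1}. - b x * (du0 x - dw0 x) + c x * (u0 x - w0 x) = 0"
    using b by (fastforce simp: field_simps)
  have d: "deriv_on (\<lambda>x. u0 x - w0 x) (\<lambda>x. du0 x - dw0 x) {0..1}"
    "deriv_on (\<lambda>x. du0 x - dw0 x) (\<lambda>x. ddu0 x - ddw0 x) {0..1}"
    using u0 w0 unfolding deriv_on_def by (auto intro!: derivative_eq_intros)
  have "\<forall>x\<in>{0..1}. u0 x - w0 x = 0"
    by (rule reduced_homogeneous_solution_zero[OF b c d Lv]) (simp add: u0(4) w0(4))
  then show ?thesis by simp
qed

section \<open>A priori bounds for the singularly perturbed problem\<close>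

lemma bvp_solution_bound:
  fixes b c f u du ddu :: "real \<Rightarrow> real"
  assumes eps: "eps \<ge> 0" and beta: "beta > 0"
    and b: "\<forall>x\<in>{0..1}. b x \<ge> beta" and c: "\<forall>x\<in>{0..1}. c x \<ge> 0"
    and f: "\<forall>x\<in>{0..1}. \<bar>f x\<bar> \<le> Fm"
    and d: "deriv_on u du {0..1}" "deriv_on du ddu {0..1}"
    and ode: "\<forall>x\<in>{0<..<1}. - eps * ddu x - b x * du x + c x * u x = f x"
    and bc: "u 0 = 0" "u 1 = 0"
  shows "\<forall>x\<in>{0..1}. \<bar>u x\<bar> \<le> 2 * ((Fm + 1) / beta)"
proof -
  define A where "A = (Fm + 1) / beta"
  have "Fm \<ge> 0" using f by force
  then have A: "A > 0" "A * beta = Fm + 1" using beta by (auto simp: A_def)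
  have "\<forall>x\<in>{0..1}. \<bar>u x\<bar> \<le> A * (2 - x)"
  proof (rule barrier_bound_01[where p' = "\<lambda>x. - A" and p'' = "\<lambda>x. 0", OF eps d _ _ c])
    show "deriv_on (\<lambda>x. A * (2 - x)) (\<lambda>x. - A) {0..1}" "deriv_on (\<lambda>x. - A) (\<lambda>x. 0) {0..1}"
      unfolding deriv_on_def by (auto intro!: derivative_eq_intros)
    show "\<forall>x\<in>{0<..<1}. \<bar>- eps * ddu x - b x * du x + c x * u x\<bar>
        < - eps * 0 - b x * - A + c x * (A * (2 - x))"
    proof
      fix x :: real assume x: "x \<in> {0<..<1}"
      have "A * beta \<le> A * b x" using A b x by (intro mult_left_mono) auto
      then have "Fm + 1 \<le> b x * A" using A by (simp add: mult.commute)
      moreover have "c x * (A * (2 - x)) \<ge> 0" using A c x by simp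
      moreover have "\<bar>f x\<bar> \<le> Fm" using f x by simp
      ultimately show "\<bar>- eps * ddu x - b x * du x + c x * u x\<bar>
          < - eps * 0 - b x * - A + c x * (A * (2 - x))"
        using ode x A by simp
    qed
  qed (use bc A in auto)
  moreover have "A * (2 - x) \<le> A * 2" if "x \<in> {0..1}" for x using that A by simp
  ultimately have "\<forall>x\<in>{0..1}. \<bar>u x\<bar> \<le> A * 2" by (meson order_trans)
  then show ?thesis unfolding A_def by (simp add: mult.commute)
qed

text \<open>\<open>eps u' + b u\<close> has a derivative bounded independently of \<open>eps\<close>, and \<open>u'\<close> vanishes
  somewhere by Rolle's theorem.\<close>

lemma bvp_solution_deriv_at_0_bound:
  fixes b b1 c f u du ddu :: "real \<Rightarrow> real"
  assumes db: "deriv_on b b1 {0..1}"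
    and b: "\<forall>x\<in>{0..1}. \<bar>b x\<bar> \<le> Bm \<and> \<bar>b1 x\<bar> \<le> Bm"
    and c: "\<forall>x\<in>{0..1}. \<bar>c x\<bar> \<le> Cm"
    and f: "\<forall>x\<in>{0..1}. \<bar>f x\<bar> \<le> Fm"
    and u: "\<forall>x\<in>{0..1}. \<bar>u x\<bar> \<le> U"
    and d: "deriv_on u du {0..1}" "deriv_on du ddu {0..1}"
    and ode: "\<forall>x\<in>{0..1}. - eps * ddu x - b x * du x + c x * u x = f x"
    and bc: "u 0 = 0" "u 1 = 0"
  shows "\<bar>eps * du 0\<bar> \<le> 2 * Bm * U + Cm * U + Fm"
proof -
  define phi where "phi x = eps * du x + b x * u x" for x
  define phi' where "phi' x = eps * ddu x + (b1 x * u x + b x * du x)" for x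
  have "deriv_on phi phi' {0..1}"
    using d db unfolding deriv_on_def phi_def phi'_def by (auto intro!: derivative_eq_intros)
  moreover have phi'_bound: "\<forall>t\<in>{0..1}. \<bar>phi' t\<bar> \<le> Bm * U + Cm * U + Fm"
  proof
    fix t :: real assume t: "t \<in> {0..1}"
    have "phi' t = b1 t * u t + c t * u t - f t"
      using ode t unfolding phi'_def by (auto simp: algebra_simps)
    moreover have "\<bar>b1 t * u t\<bar> \<le> Bm * U" "\<bar>c t * u t\<bar> \<le> Cm * U"
      using b c u t by (auto simp: abs_mult intro!: mult_mono)
    moreover have "\<bar>f t\<bar> \<le> Fm" using f t by auto
    ultimately show "\<bar>phi' t\<bar> \<le> Bm * U + Cm * U + Fm" by (smt (verit))
  qed
  moreover obtain z where z: "0 < z" "z < 1" "du z = 0"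
    using deriv_on_MVT[OF d(1), of 0 1] bc by auto
  ultimately have "\<bar>phi z - phi 0\<bar> \<le> (Bm * U + Cm * U + Fm) * (z - 0)"
    by (intro deriv_on_lipschitz) auto
  also have "\<dots> \<le> Bm * U + Cm * U + Fm"
    using z phi'_bound[rule_format, of 0] by (intro mult_left_le) auto
  finally have "\<bar>b z * u z - eps * du 0\<bar> \<le> Bm * U + Cm * U + Fm"
    using z bc unfolding phi_def by simp
  moreover have "\<bar>b z * u z\<bar> \<le> Bm * U" using b u z by (intro abs_mult_le_mult) auto
  ultimately show ?thesis by linarith
qed

text \<open>The barrier \<open>A eps (2 - x) + B eps exp (- beta x / eps)\<close>: its linear part absorbs the
  \<open>O(eps)\<close> part of the right-hand side, its layer part the rest.\<close>

lemma layer_barrier_residual: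
  fixes bx cx :: real
  assumes eps: "0 < eps" and beta: "0 < beta" "beta < beta1" and bx: "beta1 \<le> bx" and cx: "0 \<le> cx"
    and x: "x \<le> 2" and A: "0 \<le> A" "G1 + 1 \<le> A * beta"
    and B: "0 \<le> B" "G2 \<le> B * beta * (beta1 - beta)"
  defines "E \<equiv> exp (- beta * x / eps)"
  shows "(G1 + 1) * eps + G2 * E
    \<le> - eps * (B * beta * beta / eps * E) - bx * (- A * eps - B * beta * E)
      + cx * (A * eps * (2 - x) + B * eps * E)"
proof -
  have E: "0 < E" by (simp add: E_def)
  have "A * beta \<le> A * bx" using A bx beta by (intro mult_left_mono) auto
  then have "(G1 + 1) * eps \<le> A * bx * eps" using A eps by (intro mult_right_mono) auto
  moreover have "B * beta * (beta1 - beta) \<le> B * beta * (bx - beta)"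
    using B(1) beta bx by (intro mult_left_mono) auto
  then have "G2 * E \<le> B * beta * (bx - beta) * E" using B E by (intro mult_right_mono) auto
  moreover have "0 \<le> cx * (A * eps * (2 - x) + B * eps * E)" using cx x A B eps E by auto
  moreover have "- eps * (B * beta * beta / eps * E) - bx * (- A * eps - B * beta * E)
      + cx * (A * eps * (2 - x) + B * eps * E)
      = A * bx * eps + B * beta * (bx - beta) * E + cx * (A * eps * (2 - x) + B * eps * E)"
    using eps by (simp add: field_simps)
  ultimately show ?thesis by linarith
qed

lemma layer_barrier_comparison:
  fixes b c y y1 y2 g :: "real \<Rightarrow> real"
  assumes eps: "0 < eps" and beta: "0 < beta" "beta < beta1"
    and b: "\<forall>x\<in>{0..1}. beta1 \<le> b x" and c: "\<forall>x\<in>{0..1}. 0 \<le> c x"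
    and d: "deriv_on y y1 {0..1}" "deriv_on y1 y2 {0..1}"
    and eq: "\<forall>x\<in>{0<..<1}. - eps * y2 x - b x * y1 x + c x * y x = g x"
    and g: "\<forall>x\<in>{0<..<1}. \<bar>g x\<bar> \<le> G1 * eps + G2 * exp (- beta * x / eps)"
    and at1: "\<bar>y 1\<bar> \<le> G3 * eps" and at0: "\<bar>y1 0\<bar> \<le> G4"
    and A: "0 \<le> A" "G1 + 1 \<le> A * beta" "G3 \<le> A"
    and B: "0 \<le> B" "G2 \<le> B * beta * (beta1 - beta)" "G4 + 1 \<le> B * beta"
  shows "\<forall>x\<in>{0..1}. \<bar>y x\<bar> \<le> A * eps * (2 - x) + B * eps * exp (- beta * x / eps)"
proof -
  define E where "E x = exp (- beta * x / eps)" for x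
  have "\<forall>x\<in>{0..1}. \<bar>y x\<bar> \<le> A * eps * (2 - x) + B * eps * E x"
  proof (rule barrier_bound_01[OF _ d _ _ c])
    show "deriv_on (\<lambda>x. A * eps * (2 - x) + B * eps * E x) (\<lambda>x. - A * eps - B * beta * E x) {0..1}"
      "deriv_on (\<lambda>x. - A * eps - B * beta * E x) (\<lambda>x. B * beta * beta / eps * E x) {0..1}"
      using eps unfolding deriv_on_def E_def
        by (auto intro!: derivative_eq_intros simp: field_simps)
    show "\<forall>x\<in>{0<..<1}. \<bar>- eps * y2 x - b x * y1 x + c x * y x\<bar>
        < - eps * (B * beta * beta / eps * E x) - b x * (- A * eps - B * beta * E x)
          + c x * (A * eps * (2 - x) + B * eps * E x)"
    proof
      fix x :: real assume x: "x \<in> {0<..<1}"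
      have "(G1 + 1) * eps + G2 * E x
          \<le> - eps * (B * beta * beta / eps * E x) - b x * (- A * eps - B * beta * E x)
            + c x * (A * eps * (2 - x) + B * eps * E x)"
        using layer_barrier_residual[OF eps beta _ _ _ A(1,2) B(1,2), of "b x" "c x" x] b c x
        unfolding E_def by auto
      moreover have "\<bar>- eps * y2 x - b x * y1 x + c x * y x\<bar> \<le> G1 * eps + G2 * E x"
        using eq g x by (simp add: E_def)
      moreover have "(G1 + 1) * eps = G1 * eps + eps" by (simp add: algebra_simps)
      ultimately show "\<bar>- eps * y2 x - b x * y1 x + c x * y x\<bar>
          < - eps * (B * beta * beta / eps * E x) - b x * (- A * eps - B * beta * E x)
            + c x * (A * eps * (2 - x) + B * eps * E x)"
        using eps by linarith
    qed
    have "G3 * eps \<le> A * eps" "0 \<le> B * eps * E 1" using A B eps by (auto simp: E_def)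
    then show "\<bar>y 1\<bar> \<le> A * eps * (2 - 1) + B * eps * E 1" using at1 by simp
    show "- A * eps - B * beta * E 0 < sg * y1 0" if "sg = 1 \<or> sg = -1" for sg
    proof -
      have "- G4 \<le> sg * y1 0" using that at0 by (auto simp: abs_le_iff)
      moreover have "0 \<le> A * eps" using A eps by simp
      ultimately show ?thesis using B by (simp add: E_def)
    qed
  qed (use eps in simp)
  then show ?thesis unfolding E_def .
qed

lemma layer_barrier_bound:
  fixes b c y y1 y2 g :: "real \<Rightarrow> real"
  assumes eps: "0 < eps" and beta: "0 < beta" "beta < beta1"
    and b: "\<forall>x\<in>{0..1}. beta1 \<le> b x" and c: "\<forall>x\<in>{0..1}. 0 \<le> c x"
    and d: "deriv_on y y1 {0..1}" "deriv_on y1 y2 {0..1}"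
    and eq: "\<forall>x\<in>{0<..<1}. - eps * y2 x - b x * y1 x + c x * y x = g x"
    and g: "\<forall>x\<in>{0<..<1}. \<bar>g x\<bar> \<le> G1 * eps + G2 * exp (- beta * x / eps)"
    and at1: "\<bar>y 1\<bar> \<le> G3 * eps" and at0: "\<bar>y1 0\<bar> \<le> G4"
    and G: "G1 \<ge> 0" "G2 \<ge> 0" "G3 \<ge> 0"
  shows "\<forall>x\<in>{0..1}.
    \<bar>y x\<bar> \<le> (2 * ((G1 + 1) / beta + G3) + (G2 / (beta * (beta1 - beta)) + (G4 + 1) / beta)) * eps"
proof -
  define A where "A = (G1 + 1) / beta + G3"
  define B where "B = G2 / (beta * (beta1 - beta)) + (G4 + 1) / beta"
  have G4: "G4 \<ge> 0" using at0 by linarith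
  have A: "A \<ge> 0" "A * beta \<ge> G1 + 1" "A \<ge> G3"
    using G beta by (auto simp: A_def field_simps)
  have "B * beta * (beta1 - beta) = G2 + (G4 + 1) * (beta1 - beta)"
    "B * beta = G2 / (beta1 - beta) + (G4 + 1)"
    using beta by (auto simp: B_def field_simps)
  then have B: "B \<ge> 0" "B * beta * (beta1 - beta) \<ge> G2" "B * beta \<ge> G4 + 1"
    using G G4 beta by (auto simp: B_def)
  have "\<bar>y x\<bar> \<le> (2 * A + B) * eps" if x: "x \<in> {0..1}" for x
  proof -
    have "exp (- beta * x / eps) \<le> 1" using x beta eps by simp
    then have "B * eps * exp (- beta * x / eps) \<le> B * eps" using B eps by (simp add: mult_left_le)
    moreover have "A * eps * (2 - x) \<le> A * eps * 2" using x A eps by (intro mult_left_mono) auto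
    ultimately show ?thesis
      using layer_barrier_comparison[OF eps beta b c d eq g at1 at0 A(1,2,3) B(1,2,3)] x
      by (fastforce simp: algebra_simps)
  qed
  then show ?thesis unfolding A_def B_def by blast
qed

section \<open>Derivative bounds for the smooth remainder\<close>

locale layer_data =
  fixes b b1 b2 c c1 c2 f U0 U1 U2 U3 U4 :: "real \<Rightarrow> real"
    and beta beta1 Bm Cm Fm Um :: real
  assumes beta: "0 < beta" "beta < beta1"
    and b_ge: "\<And>x. x \<in> {0..1} \<Longrightarrow> beta1 \<le> b x"
    and c_nonneg: "\<And>x. x \<in> {0..1} \<Longrightarrow> 0 \<le> c x"
    and deriv_b: "deriv_on b b1 {0..1}" "deriv_on b1 b2 {0..1}"
    and deriv_c: "deriv_on c c1 {0..1}" "deriv_on c1 c2 {0..1}"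
    and f_cont: "continuous_on {0..1} f"
    and b_bound: "\<And>x. x \<in> {0..1} \<Longrightarrow> \<bar>b x\<bar> \<le> Bm \<and> \<bar>b1 x\<bar> \<le> Bm \<and> \<bar>b2 x\<bar> \<le> Bm"
    and c_bound: "\<And>x. x \<in> {0..1} \<Longrightarrow> \<bar>c x\<bar> \<le> Cm \<and> \<bar>c1 x\<bar> \<le> Cm \<and> \<bar>c2 x\<bar> \<le> Cm"
    and f_bound: "\<And>x. x \<in> {0..1} \<Longrightarrow> \<bar>f x\<bar> \<le> Fm"
    and deriv_U: "deriv_on U0 U1 {0..1}" "deriv_on U1 U2 {0..1}"
      "deriv_on U2 U3 {0..1}" "deriv_on U3 U4 {0..1}"
    and U_bound: "\<And>x. x \<in> {0..1} \<Longrightarrow>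
      \<bar>U0 x\<bar> \<le> Um \<and> \<bar>U1 x\<bar> \<le> Um \<and> \<bar>U2 x\<bar> \<le> Um \<and> \<bar>U3 x\<bar> \<le> Um \<and> \<bar>U4 x\<bar> \<le> Um"
    and reduced_eq: "\<And>x. x \<in> {0..1} \<Longrightarrow> - b x * U1 x + c x * U0 x = f x"
    and U0_at_1: "U0 1 = 0"
begin

lemma bounds_nonneg: "0 \<le> Bm" "0 \<le> Cm" "0 \<le> Fm" "0 \<le> Um"
  using b_bound[of 0] c_bound[of 0] f_bound[of 0] U_bound[of 0]
  by (auto intro: order_trans[OF abs_ge_zero])

lemma b_ge_all: "\<forall>x\<in>{0..1}. beta1 \<le> b x"
  using b_ge by blast

lemma b_at_0: "beta1 \<le> b 0" "0 < b 0" "b 0 \<le> Bm"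
  using b_ge[of 0] b_bound[of 0] beta by auto

definition u_max :: real where "u_max = 2 * ((Fm + 1) / beta)"

definition K_max :: real where "K_max = (2 * Bm * u_max + Cm * u_max + Fm) / beta1"

definition q0_max :: real where "q0_max = Bm * Bm / (beta1 - beta) + Cm"

definition q1_max :: real where "q1_max = Bm * Bm + Cm + Bm * q0_max"

definition q2_max :: real where
  "q2_max = (Bm * Bm + Cm) + 2 * Bm * (Bm * Bm + Cm) + Bm * Bm * q0_max"

lemma max_consts_nonneg: "0 \<le> u_max" "0 \<le> K_max" "0 \<le> q0_max" "0 \<le> q1_max" "0 \<le> q2_max"
  using bounds_nonneg beta
  by (auto simp: u_max_def K_max_def q0_max_def q1_max_def q2_max_def)

text \<open>The constants of the successive estimates: \<open>P_k eps + R_k E x / eps ^ (k - 1)\<close>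
  bounds the right-hand side of the \<open>k\<close>-th differentiated first-order equation, and
  \<open>S_k / eps ^ (k - 1)\<close> bounds the initial value of the \<open>k\<close>-th derivative of the remainder.\<close>

definition Y0 :: real where
  "Y0 = 2 * ((Um + 1) / beta + K_max / beta)
      + (K_max * q0_max / (beta * (beta1 - beta)) + (Um + 1) / beta)"

definition Y1 :: real where "Y1 = (Cm * Y0 + Um) / beta + Um + K_max * q0_max / (beta1 - beta)"

definition P2 :: real where "P2 = Cm * Y0 + (Cm + Bm) * Y1 + Um"
definition R2 :: real where "R2 = (Cm + Bm) * Y1 + K_max * q1_max"
definition S2 :: real where "S2 = Cm * Y0 + Um + K_max * q0_max + Bm * Um"
definition Y2 :: real where "Y2 = P2 / beta + S2 + R2 / (beta1 - beta)"

definition P3 :: real where "P3 = Cm * Y0 + (2 * Cm + Bm) * Y1 + (Cm + 2 * Bm) * Y2 + Um"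
definition R3 :: real where "R3 = (2 * Cm + Bm) * Y1 + (Cm + 2 * Bm) * Y2 + K_max * q2_max"
definition S3 :: real where "S3 = P2 + R2 + 2 * Bm * Y2"
definition Y3 :: real where "Y3 = P3 / beta + S3 + R3 / (beta1 - beta)"

definition Y4 :: real where "Y4 = P3 + R3 + Bm * Y3"

lemma stage_consts_nonneg:
  "0 \<le> Y0" "0 \<le> Y1" "0 \<le> P2" "0 \<le> R2" "0 \<le> S2" "0 \<le> Y2"
  "0 \<le> P3" "0 \<le> R3" "0 \<le> S3" "0 \<le> Y3" "0 \<le> Y4"
proof -
  note nn = bounds_nonneg max_consts_nonneg
  have d: "0 < beta1 - beta" using beta by simp
  show Y0: "0 \<le> Y0" using nn beta d unfolding Y0_def by simp
  show Y1: "0 \<le> Y1" using nn beta d Y0 unfolding Y1_def by simp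
  show P2: "0 \<le> P2" "0 \<le> R2" "0 \<le> S2" using nn Y0 Y1 unfolding P2_def R2_def S2_def by simp_all
  show Y2: "0 \<le> Y2" using P2 beta d unfolding Y2_def by simp
  show P3: "0 \<le> P3" "0 \<le> R3" "0 \<le> S3" using nn Y0 Y1 Y2 P2 unfolding P3_def R3_def S3_def
    by simp_all
  show Y3: "0 \<le> Y3" using P3 beta d unfolding Y3_def by simp
  show "0 \<le> Y4" using P3 Y3 nn unfolding Y4_def by simp
qed

end

locale layer_scale = layer_data +
  fixes eps :: real
  assumes eps: "0 < eps" "eps < 1"
begin

definition E :: "real \<Rightarrow> real" where "E x = exp (- beta * x / eps)"

definition layer :: "real \<Rightarrow> real" where "layer x = exp (- b 0 * x / eps)"

definition m0 :: "real \<Rightarrow> real" where "m0 x = (b x - b 0) * b 0 / eps + c x"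
definition m1 :: "real \<Rightarrow> real" where "m1 x = b1 x * b 0 / eps + c1 x"
definition m2 :: "real \<Rightarrow> real" where "m2 x = b2 x * b 0 / eps + c2 x"

text \<open>\<open>q\<close> is the residual of the layer function under the differential operator (see
  \<open>layer_residual\<close>); \<open>q1\<close> and \<open>q2\<close> are its derivatives, and \<open>m1\<close>, \<open>m2\<close> those of \<open>m0\<close>.\<close>

definition q :: "real \<Rightarrow> real" where "q x = layer x * m0 x"
definition q1 :: "real \<Rightarrow> real" where "q1 x = layer x * (m1 x - b 0 / eps * m0 x)"
definition q2 :: "real \<Rightarrow> real" where
  "q2 x = layer x * (m2 x - 2 * (b 0 / eps) * m1 x + (b 0 / eps)\<^sup>2 * m0 x)"

lemma layer_residual:
  "- eps * ((b 0 / eps)\<^sup>2 * layer x) - b x * (- (b 0 / eps) * layer x) + c x * layer x = q x"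
  using eps by (simp add: q_def m0_def power2_eq_square field_simps)

lemma deriv_layer_residual: "deriv_on q q1 {0..1}" "deriv_on q1 q2 {0..1}"
  using deriv_b deriv_c eps
    unfolding deriv_on_def q_def q1_def q2_def m0_def m1_def m2_def layer_def
  by (auto intro!: derivative_eq_intros simp: field_simps power2_eq_square)

lemma E_bounds: "x \<in> {0..1} \<Longrightarrow> 0 < E x \<and> E x \<le> 1"
  using beta eps by (simp add: E_def)

lemma E_le_E_div_eps:
  "x \<in> {0..1} \<Longrightarrow> 0 \<le> E x \<and> E x \<le> E x / eps \<and> E x / eps \<le> E x / eps\<^sup>2"
  using E_bounds[of x] eps by (auto simp: divide_simps power2_eq_square mult_left_le)

lemma layer_le_E: "x \<in> {0..1} \<Longrightarrow> layer x \<le> E x"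
  unfolding layer_def E_def using eps b_at_0 beta by (intro exp_decay_mono) auto

lemma layer_m0_bound:
  assumes x: "x \<in> {0..1}"
  shows "layer x * \<bar>m0 x\<bar> \<le> q0_max * E x"
proof -
  have L: "0 < layer x" "layer x \<le> E x" using layer_le_E[OF x] by (auto simp: layer_def)
  have "\<bar>b x - b 0\<bar> \<le> Bm * (x - 0)"
    using deriv_on_lipschitz[OF deriv_b(1), of 0 x] x b_bound by auto
  then have "\<bar>(b x - b 0) * b 0\<bar> \<le> Bm * x * Bm" using b_at_0 by (intro abs_mult_le_mult) auto
  then have "\<bar>(b x - b 0) * b 0 / eps\<bar> \<le> Bm * Bm * (x / eps)"
    using eps by (simp add: abs_divide divide_right_mono mult.commute mult.left_commute)
  then have "\<bar>m0 x\<bar> \<le> Bm * Bm * (x / eps) + Cm"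
    using c_bound[OF x] abs_triangle_ineq[of "(b x - b 0) * b 0 / eps" "c x"]
    unfolding m0_def by linarith
  then have "layer x * \<bar>m0 x\<bar> \<le> layer x * (Bm * Bm * (x / eps) + Cm)"
    using L by (intro mult_left_mono) auto
  also have "\<dots> = Bm * Bm * (layer x * (x / eps)) + Cm * layer x" by (simp add: algebra_simps)
  also have "\<dots> \<le> Bm * Bm * (E x / (beta1 - beta)) + Cm * E x"
    using exp_decay_absorbs_linear[of eps x beta1 "b 0" beta] eps x b_at_0 beta L bounds_nonneg
    by (intro add_mono mult_left_mono) (auto simp: layer_def E_def)
  finally show ?thesis by (simp add: q0_max_def algebra_simps)
qed

lemma layer_m12_bound:
  assumes x: "x \<in> {0..1}"
  shows "layer x * \<bar>m1 x\<bar> \<le> E x * ((Bm * Bm + Cm) / eps)"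
    "layer x * \<bar>m2 x\<bar> \<le> E x * ((Bm * Bm + Cm) / eps)"
proof -
  have bound: "layer x * \<bar>bk x * b 0 / eps + ck x\<bar> \<le> E x * ((Bm * Bm + Cm) / eps)"
    if "\<bar>bk x\<bar> \<le> Bm" "\<bar>ck x\<bar> \<le> Cm" for bk ck :: "real \<Rightarrow> real"
  proof -
    have "\<bar>bk x * b 0\<bar> \<le> Bm * Bm" using that b_at_0 by (intro abs_mult_le_mult) auto
    then have "\<bar>bk x * b 0 / eps\<bar> \<le> Bm * Bm / eps"
      using eps by (simp add: abs_divide divide_right_mono)
    moreover have "Cm \<le> Cm / eps" using eps bounds_nonneg by (simp add: le_divide_eq mult_left_le)
    ultimately have "\<bar>bk x * b 0 / eps + ck x\<bar> \<le> (Bm * Bm + Cm) / eps"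
      using that abs_triangle_ineq[of "bk x * b 0 / eps" "ck x"] by (simp add: add_divide_distrib)
    then show ?thesis using layer_le_E[OF x] E_bounds[OF x]
      by (intro mult_mono) (auto simp: layer_def)
  qed
  show "layer x * \<bar>m1 x\<bar> \<le> E x * ((Bm * Bm + Cm) / eps)"
    "layer x * \<bar>m2 x\<bar> \<le> E x * ((Bm * Bm + Cm) / eps)"
    using bound[of b1 c1] bound[of b2 c2] b_bound[OF x] c_bound[OF x] by (auto simp: m1_def m2_def)
qed

lemma layer_residual_bounds:
  assumes x: "x \<in> {0..1}"
  shows "\<bar>q x\<bar> \<le> q0_max * E x" "\<bar>q1 x\<bar> \<le> q1_max * E x / eps"
    "\<bar>q2 x\<bar> \<le> q2_max * E x / eps\<^sup>2"
proof -
  note nn = bounds_nonneg max_consts_nonneg and M0 = layer_m0_bound[OF x]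
    and M1 = layer_m12_bound(1)[OF x] and M2 = layer_m12_bound(2)[OF x]
  define k where "k = b 0 / eps"
  have k: "0 \<le> k" "k \<le> Bm / eps" using b_at_0 eps unfolding k_def by (auto intro: divide_right_mono)
  have L: "0 < layer x" "layer x \<le> E x" using layer_le_E[OF x] by (auto simp: layer_def)
  show "\<bar>q x\<bar> \<le> q0_max * E x" using M0 L by (simp add: q_def abs_mult)
  have "\<bar>m1 x - k * m0 x\<bar> \<le> \<bar>m1 x\<bar> + k * \<bar>m0 x\<bar>"
    using abs_triangle_ineq4[of "m1 x" "k * m0 x"] k by (simp add: abs_mult)
  then have "\<bar>q1 x\<bar> \<le> layer x * (\<bar>m1 x\<bar> + k * \<bar>m0 x\<bar>)"
    using L unfolding q1_def k_def[symmetric] by (simp add: abs_mult mult_left_mono)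
  also have "\<dots> = layer x * \<bar>m1 x\<bar> + k * (layer x * \<bar>m0 x\<bar>)" by (simp add: algebra_simps)
  also have "\<dots> \<le> E x * ((Bm * Bm + Cm) / eps) + Bm / eps * (q0_max * E x)"
    using M1 mult_mono[OF k(2) M0] k L eps nn by (intro add_mono) auto
  also have "\<dots> = q1_max * E x / eps" using eps by (simp add: q1_max_def field_simps)
  finally show "\<bar>q1 x\<bar> \<le> q1_max * E x / eps" .
  have "\<bar>m2 x - 2 * k * m1 x + k\<^sup>2 * m0 x\<bar> \<le> \<bar>m2 x\<bar> + 2 * k * \<bar>m1 x\<bar> + k\<^sup>2 * \<bar>m0 x\<bar>"
    using abs_triangle_ineq4[of "m2 x" "2 * k * m1 x"]
      abs_triangle_ineq[of "m2 x - 2 * k * m1 x" "k\<^sup>2 * m0 x"] k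
    by (simp add: abs_mult)
  then have "\<bar>q2 x\<bar> \<le> layer x * (\<bar>m2 x\<bar> + 2 * k * \<bar>m1 x\<bar> + k\<^sup>2 * \<bar>m0 x\<bar>)"
    using L unfolding q2_def k_def[symmetric] by (simp add: abs_mult mult_left_mono)
  also have "\<dots> = layer x * \<bar>m2 x\<bar> + 2 * k * (layer x * \<bar>m1 x\<bar>) + k\<^sup>2 * (layer x * \<bar>m0 x\<bar>)"
    by (simp add: algebra_simps)
  also have "\<dots> \<le> E x * ((Bm * Bm + Cm) / eps) + 2 * (Bm / eps) * (E x * ((Bm * Bm + Cm) / eps))
      + (Bm / eps)\<^sup>2 * (q0_max * E x)"
    using mult_mono[OF _ M1, of "2 * k" "2 * (Bm / eps)"] mult_mono[OF power_mono[OF k(2) k(1)] M0]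
      M2 k L eps nn by (intro add_mono) auto
  also have "\<dots> \<le> q2_max * E x / eps\<^sup>2"
  proof -
    have "E x * ((Bm * Bm + Cm) / eps) \<le> E x * ((Bm * Bm + Cm) / eps\<^sup>2)"
      using L eps nn
        by (intro mult_left_mono divide_left_mono) (auto simp: power2_eq_square mult_left_le)
    moreover have "E x * ((Bm * Bm + Cm) / eps\<^sup>2) + 2 * (Bm / eps) * (E x * ((Bm * Bm + Cm) / eps))
        + (Bm / eps)\<^sup>2 * (q0_max * E x) = q2_max * E x / eps\<^sup>2"
      using eps by (simp add: q2_max_def field_simps power2_eq_square)
    ultimately show ?thesis by linarith
  qed
  finally show "\<bar>q2 x\<bar> \<le> q2_max * E x / eps\<^sup>2" .
qed

end

locale layer_solution = layer_scale +
  fixes u du ddu :: "real \<Rightarrow> real"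
  assumes deriv_u: "deriv_on u du {0..1}" "deriv_on du ddu {0..1}"
    and ddu_cont: "continuous_on {0..1} ddu"
    and ode: "\<And>x. x \<in> {0<..<1} \<Longrightarrow> - eps * ddu x - b x * du x + c x * u x = f x"
    and bc: "u 0 = 0" "u 1 = 0"
begin

lemma ode_closed: "x \<in> {0..1} \<Longrightarrow> - eps * ddu x - b x * du x + c x * u x = f x"
proof -
  have "\<forall>x\<in>{0..1}. - eps * ddu x - b x * du x + c x * u x = f x"
  proof (rule continuous_on_eq_01[OF _ f_cont])
    have "continuous_on {0..1} b" "continuous_on {0..1} c" "continuous_on {0..1} u"
      "continuous_on {0..1} du"
      using deriv_b(1) deriv_c(1) deriv_u by (auto intro: deriv_on_continuous_on)
    then show "continuous_on {0..1} (\<lambda>x. - eps * ddu x - b x * du x + c x * u x)"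
      using ddu_cont by (intro continuous_intros)
  qed (use ode in blast)
  then show "x \<in> {0..1} \<Longrightarrow> ?thesis" by blast
qed

lemma u_bound: "x \<in> {0..1} \<Longrightarrow> \<bar>u x\<bar> \<le> u_max"
  using bvp_solution_bound[of eps beta b c f Fm u du ddu] eps beta b_ge c_nonneg f_bound
    deriv_u ode bc
  unfolding u_max_def by (fastforce intro: order_trans[OF _ b_ge])

definition K :: real where "K = - eps * du 0 / b 0"

lemma K_bound: "\<bar>K\<bar> \<le> K_max"
proof -
  have "\<bar>eps * du 0\<bar> \<le> 2 * Bm * u_max + Cm * u_max + Fm"
    using bvp_solution_deriv_at_0_bound[OF deriv_b(1) _ _ _ _ deriv_u _ bc]
      b_bound c_bound f_bound u_bound ode_closed by blast
  moreover have "\<bar>K\<bar> = \<bar>eps * du 0\<bar> / b 0" using b_at_0 by (simp add: K_def abs_divide)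
  ultimately have "\<bar>K\<bar> \<le> (2 * Bm * u_max + Cm * u_max + Fm) / b 0"
    using b_at_0 by (simp add: divide_right_mono)
  also have "\<dots> \<le> (2 * Bm * u_max + Cm * u_max + Fm) / beta1"
    using b_at_0 beta bounds_nonneg max_consts_nonneg by (intro divide_left_mono) auto
  finally show ?thesis unfolding K_max_def .
qed

definition y :: "real \<Rightarrow> real" where "y x = u x - U0 x - K * layer x"
definition y1 :: "real \<Rightarrow> real" where "y1 x = du x - U1 x + K * (b 0 / eps) * layer x"
definition y2 :: "real \<Rightarrow> real" where "y2 x = ddu x - U2 x - K * (b 0 / eps)\<^sup>2 * layer x"

lemma deriv_rem: "deriv_on y y1 {0..1}" "deriv_on y1 y2 {0..1}"
  using deriv_u deriv_U eps unfolding deriv_on_def y_def y1_def y2_def layer_def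
  by (auto intro!: derivative_eq_intros simp: field_simps power2_eq_square)

definition g :: "real \<Rightarrow> real" where "g x = eps * U2 x - K * q x"

lemma rem_eq: "x \<in> {0..1} \<Longrightarrow> - eps * y2 x - b x * y1 x + c x * y x = g x"
proof -
  assume x: "x \<in> {0..1}"
  have "- eps * y2 x - b x * y1 x + c x * y x
      = (- eps * ddu x - b x * du x + c x * u x) + eps * U2 x - (- b x * U1 x + c x * U0 x)
        - K * (- eps * ((b 0 / eps)\<^sup>2 * layer x) - b x * (- (b 0 / eps) * layer x) + c x * layer x)"
    unfolding y_def y1_def y2_def by (simp add: algebra_simps)
  then show ?thesis using ode_closed[OF x] reduced_eq[OF x] layer_residual[of x]
    by (simp add: g_def)
qed

lemma g_bound: "x \<in> {0..1} \<Longrightarrow> \<bar>g x\<bar> \<le> Um * eps + K_max * q0_max * E x"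
proof -
  assume x: "x \<in> {0..1}"
  have "\<bar>eps * U2 x\<bar> \<le> eps * Um" using U_bound[OF x] eps by (simp add: abs_mult mult_left_mono)
  moreover have "\<bar>K * q x\<bar> \<le> K_max * (q0_max * E x)"
    using abs_mult_le_mult[OF K_bound layer_residual_bounds(1)[OF x]] .
  ultimately show ?thesis unfolding g_def
    by (simp add: algebra_simps abs_triangle_ineq4[THEN order_trans])
qed

lemma rem_at_1: "\<bar>y 1\<bar> \<le> K_max / beta * eps"
proof -
  have "\<bar>y 1\<bar> = \<bar>K\<bar> * exp (- b 0 / eps)" using bc U0_at_1 by (simp add: y_def layer_def abs_mult)
  also have "\<dots> \<le> K_max * (eps / beta)"
    using K_bound exp_neg_inverse_le[of eps beta "b 0"] eps beta b_at_0 max_consts_nonneg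
    by (intro mult_mono) auto
  finally show ?thesis by simp
qed

lemma rem1_at_0: "y1 0 = - U1 0"
  using eps b_at_0 by (simp add: y1_def K_def layer_def field_simps)

lemma rem_bound: "x \<in> {0..1} \<Longrightarrow> \<bar>y x\<bar> \<le> Y0 * eps"
proof -
  have "\<forall>x\<in>{0..1}. \<bar>y x\<bar> \<le> (2 * ((Um + 1) / beta + K_max / beta)
      + (K_max * q0_max / (beta * (beta1 - beta)) + (Um + 1) / beta)) * eps"
  proof (rule layer_barrier_bound[OF eps(1) beta _ _ deriv_rem])
    show "\<forall>x\<in>{0<..<1}. - eps * y2 x - b x * y1 x + c x * y x = g x" using rem_eq by auto
    show "\<forall>x\<in>{0<..<1}. \<bar>g x\<bar> \<le> Um * eps + K_max * q0_max * exp (- beta * x / eps)"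
      using g_bound by (auto simp: E_def)
    show "\<bar>y1 0\<bar> \<le> Um" using rem1_at_0 U_bound[of 0] by simp
  qed (use b_ge c_nonneg rem_at_1 bounds_nonneg max_consts_nonneg beta in auto)
  then show "x \<in> {0..1} \<Longrightarrow> ?thesis" unfolding Y0_def by blast
qed

definition r :: "real \<Rightarrow> real" where "r x = c x * y x - g x"

lemma rem1_eq: "x \<in> {0..1} \<Longrightarrow> eps * y2 x + b x * y1 x = r x"
  using rem_eq[of x] unfolding r_def by (simp add: algebra_simps)

lemma r_bound: "x \<in> {0..1} \<Longrightarrow> \<bar>r x\<bar> \<le> (Cm * Y0 + Um) * eps + K_max * q0_max * E x / eps ^ 0"
proof -
  assume x: "x \<in> {0..1}"
  have "\<bar>c x * y x\<bar> \<le> Cm * (Y0 * eps)" using c_bound[OF x] rem_bound[OF x]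
    by (intro abs_mult_le_mult) auto
  then show ?thesis using g_bound[OF x] unfolding r_def
    by (simp add: algebra_simps abs_triangle_ineq4[THEN order_trans])
qed

lemma rem1_bound: "x \<in> {0..1} \<Longrightarrow> \<bar>y1 x\<bar> \<le> Y1 * (eps + E x)"
proof -
  have "\<forall>x\<in>{0..1}. \<bar>y1 x\<bar> \<le> Y1 * (eps + exp (- beta * x / eps) / eps ^ 0)"
    unfolding Y1_def
  proof (rule first_order_layer_bound[OF eps(1) beta b_ge_all deriv_rem(2)])
    show "\<forall>x\<in>{0..1}. \<bar>r x\<bar>
        \<le> (Cm * Y0 + Um) * eps + K_max * q0_max * exp (- beta * x / eps) / eps ^ 0"
      using r_bound by (auto simp: E_def)
    show "\<bar>y1 0\<bar> \<le> Um / eps ^ 0" using rem1_at_0 U_bound[of 0] by simp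
  qed (use rem1_eq bounds_nonneg max_consts_nonneg stage_consts_nonneg in auto)
  then show "x \<in> {0..1} \<Longrightarrow> ?thesis" by (simp add: E_def)
qed

definition r1 :: "real \<Rightarrow> real" where "r1 x = c1 x * y x + c x * y1 x - (eps * U3 x - K * q1 x)"

definition y3 :: "real \<Rightarrow> real" where "y3 x = (r1 x - b1 x * y1 x - b x * y2 x) / eps"

lemma deriv_r: "deriv_on r r1 {0..1}"
  using deriv_c deriv_rem deriv_U deriv_layer_residual
  unfolding deriv_on_def r_def r1_def g_def
    by (auto intro!: derivative_eq_intros simp: algebra_simps)

lemma deriv_rem2: "deriv_on y2 y3 {0..1}"
proof (rule deriv_on_cong)
  show "deriv_on (\<lambda>x. (r x - b x * y1 x) / eps) y3 {0..1}"
    using deriv_r deriv_b deriv_rem eps unfolding deriv_on_def y3_def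
    by (auto intro!: derivative_eq_intros simp: field_simps)
  show "\<forall>x\<in>{0..1}. (r x - b x * y1 x) / eps = y2 x"
    using rem1_eq eps by (auto simp: field_simps)
qed auto

lemma rem2_eq: "x \<in> {0..1} \<Longrightarrow> eps * y3 x + b x * y2 x = r1 x - b1 x * y1 x"
  using eps by (simp add: y3_def field_simps)

lemma rho1_bound:
  assumes x: "x \<in> {0..1}"
  shows "\<bar>r1 x - b1 x * y1 x\<bar> \<le> P2 * eps + R2 * E x / eps ^ 1"
proof -
  note nn = bounds_nonneg max_consts_nonneg stage_consts_nonneg
  have "\<bar>c1 x * y x\<bar> \<le> Cm * (Y0 * eps)" "\<bar>c x * y1 x\<bar> \<le> Cm * (Y1 * (eps + E x))"
    "\<bar>b1 x * y1 x\<bar> \<le> Bm * (Y1 * (eps + E x))"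
    using c_bound[OF x] b_bound[OF x] rem_bound[OF x] rem1_bound[OF x]
    by (auto intro!: abs_mult_le_mult)
  moreover have "\<bar>eps * U3 x\<bar> \<le> eps * Um" using U_bound[OF x] eps
    by (simp add: abs_mult mult_left_mono)
  moreover have "\<bar>K * q1 x\<bar> \<le> K_max * (q1_max * E x / eps)"
    using abs_mult_le_mult[OF K_bound layer_residual_bounds(2)[OF x]] .
  ultimately have "\<bar>r1 x - b1 x * y1 x\<bar> \<le> Cm * (Y0 * eps) + Cm * (Y1 * (eps + E x)) + eps * Um
      + K_max * (q1_max * E x / eps) + Bm * (Y1 * (eps + E x))"
    unfolding r1_def by linarith
  also have "\<dots> = P2 * eps + (Cm + Bm) * Y1 * E x + K_max * q1_max * (E x / eps)"
    unfolding P2_def by (simp add: algebra_simps)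
  also have "\<dots> \<le> P2 * eps + (Cm + Bm) * Y1 * (E x / eps) + K_max * q1_max * (E x / eps)"
    using mult_left_mono[of "E x" "E x / eps" "(Cm + Bm) * Y1"] E_le_E_div_eps[OF x] nn by simp
  also have "\<dots> = P2 * eps + R2 * E x / eps ^ 1" using eps by (simp add: R2_def field_simps)
  finally show ?thesis .
qed

lemma rem2_at_0: "\<bar>y2 0\<bar> \<le> S2 / eps ^ 1"
proof -
  have "y2 0 = (r 0 - b 0 * y1 0) / eps" using rem1_eq[of 0] eps by (simp add: field_simps)
  moreover have "\<bar>r 0\<bar> \<le> (Cm * Y0 + Um) + K_max * q0_max"
  proof -
    have "(Cm * Y0 + Um) * eps \<le> Cm * Y0 + Um"
      using eps bounds_nonneg stage_consts_nonneg by (simp add: mult_left_le)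
    then show ?thesis using r_bound[of 0] by (simp add: E_def)
  qed
  moreover have "\<bar>b 0 * y1 0\<bar> \<le> Bm * Um"
    using b_at_0 U_bound[of 0] rem1_at_0 by (intro abs_mult_le_mult) auto
  ultimately show ?thesis
    using eps unfolding S2_def
      by (simp add: abs_divide divide_right_mono abs_triangle_ineq4[THEN order_trans])
qed

lemma rem2_bound: "x \<in> {0..1} \<Longrightarrow> \<bar>y2 x\<bar> \<le> Y2 * (eps + E x / eps)"
proof -
  have "\<forall>x\<in>{0..1}. \<bar>y2 x\<bar> \<le> Y2 * (eps + exp (- beta * x / eps) / eps ^ 1)"
    unfolding Y2_def
  proof (rule first_order_layer_bound[OF eps(1) beta b_ge_all deriv_rem2])
    show "\<forall>x\<in>{0..1}. \<bar>r1 x - b1 x * y1 x\<bar> \<le> P2 * eps + R2 * exp (- beta * x / eps) / eps ^ 1"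
      using rho1_bound by (auto simp: E_def)
  qed (use rem2_eq rem2_at_0 stage_consts_nonneg in auto)
  then show "x \<in> {0..1} \<Longrightarrow> ?thesis" by (simp add: E_def)
qed

definition r2 :: "real \<Rightarrow> real" where
  "r2 x = c2 x * y x + 2 * (c1 x * y1 x) + c x * y2 x - (eps * U4 x - K * q2 x)"

definition y4 :: "real \<Rightarrow> real" where
  "y4 x = (r2 x - b2 x * y1 x - 2 * (b1 x * y2 x) - b x * y3 x) / eps"

lemma deriv_r1: "deriv_on r1 r2 {0..1}"
  using deriv_c deriv_rem deriv_U deriv_layer_residual
  unfolding deriv_on_def r1_def r2_def by (auto intro!: derivative_eq_intros simp: algebra_simps)

lemma deriv_rem3: "deriv_on y3 y4 {0..1}"
  using deriv_r1 deriv_b deriv_rem deriv_rem2 eps unfolding deriv_on_def y3_def y4_def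
  by (auto intro!: derivative_eq_intros simp: field_simps)

lemma rem3_eq: "x \<in> {0..1} \<Longrightarrow> eps * y4 x + b x * y3 x = r2 x - b2 x * y1 x - 2 * (b1 x * y2 x)"
  using eps by (simp add: y4_def field_simps)

lemma rho2_bound:
  assumes x: "x \<in> {0..1}"
  shows "\<bar>r2 x - b2 x * y1 x - 2 * (b1 x * y2 x)\<bar> \<le> P3 * eps + R3 * E x / eps\<^sup>2"
proof -
  note nn = bounds_nonneg max_consts_nonneg stage_consts_nonneg
  have "\<bar>c2 x * y x\<bar> \<le> Cm * (Y0 * eps)" "\<bar>c1 x * y1 x\<bar> \<le> Cm * (Y1 * (eps + E x))"
    "\<bar>c x * y2 x\<bar> \<le> Cm * (Y2 * (eps + E x / eps))" "\<bar>b2 x * y1 x\<bar> \<le> Bm * (Y1 * (eps + E x))"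
    "\<bar>b1 x * y2 x\<bar> \<le> Bm * (Y2 * (eps + E x / eps))"
    using c_bound[OF x] b_bound[OF x] rem_bound[OF x] rem1_bound[OF x] rem2_bound[OF x]
    by (auto intro!: abs_mult_le_mult)
  moreover have "\<bar>eps * U4 x\<bar> \<le> eps * Um" using U_bound[OF x] eps
    by (simp add: abs_mult mult_left_mono)
  moreover have "\<bar>K * q2 x\<bar> \<le> K_max * (q2_max * E x / eps\<^sup>2)"
    using abs_mult_le_mult[OF K_bound layer_residual_bounds(3)[OF x]] .
  ultimately have "\<bar>r2 x - b2 x * y1 x - 2 * (b1 x * y2 x)\<bar> \<le> Cm * (Y0 * eps)
      + 2 * (Cm * (Y1 * (eps + E x))) + Cm * (Y2 * (eps + E x / eps)) + eps * Um
      + K_max * (q2_max * E x / eps\<^sup>2) + Bm * (Y1 * (eps + E x))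
          + 2 * (Bm * (Y2 * (eps + E x / eps)))"
    unfolding r2_def by linarith
  also have "\<dots> = P3 * eps + (2 * Cm + Bm) * Y1 * E x + (Cm + 2 * Bm) * Y2 * (E x / eps)
      + K_max * q2_max * (E x / eps\<^sup>2)"
    unfolding P3_def by (simp add: algebra_simps)
  also have "\<dots> \<le> P3 * eps + (2 * Cm + Bm) * Y1 * (E x / eps\<^sup>2) + (Cm + 2 * Bm) * Y2 * (E x / eps\<^sup>2)
      + K_max * q2_max * (E x / eps\<^sup>2)"
  proof -
    have "E x \<le> E x / eps\<^sup>2" "E x / eps \<le> E x / eps\<^sup>2" using E_le_E_div_eps[OF x] by auto
    then show ?thesis using nn by (intro add_mono mult_left_mono order_refl) auto
  qed
  also have "\<dots> = P3 * eps + R3 * E x / eps\<^sup>2" using eps by (simp add: R3_def field_simps)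
  finally show ?thesis .
qed

lemma rem3_at_0: "\<bar>y3 0\<bar> \<le> S3 / eps\<^sup>2"
proof -
  note nn = bounds_nonneg max_consts_nonneg stage_consts_nonneg
  have e: "eps \<le> 1 / eps" "E 0 = 1" using eps
    by (auto simp: E_def divide_simps power2_eq_square mult_le_one)
  have "\<bar>r1 0 - b1 0 * y1 0\<bar> \<le> P2 * eps + R2 * (1 / eps)" using rho1_bound[of 0] e by simp
  also have "\<dots> \<le> P2 * (1 / eps) + R2 * (1 / eps)" using e nn by (intro add_mono mult_left_mono) auto
  finally have rho: "\<bar>r1 0 - b1 0 * y1 0\<bar> \<le> (P2 + R2) / eps" by (simp add: add_divide_distrib)
  have "\<bar>b 0 * y2 0\<bar> \<le> Bm * (Y2 * (eps + 1 / eps))"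
    using b_at_0 rem2_bound[of 0] e by (intro abs_mult_le_mult) auto
  also have "\<dots> \<le> Bm * (Y2 * (2 / eps))" using e nn by (intro mult_left_mono) auto
  also have "\<dots> = 2 * Bm * Y2 / eps" by simp
  finally have "\<bar>r1 0 - b1 0 * y1 0 - b 0 * y2 0\<bar> \<le> (P2 + R2) / eps + 2 * Bm * Y2 / eps"
    using rho abs_triangle_ineq4[of "r1 0 - b1 0 * y1 0" "b 0 * y2 0"] by linarith
  also have "\<dots> = S3 / eps" unfolding S3_def by (simp add: add_divide_distrib)
  finally have "\<bar>r1 0 - b1 0 * y1 0 - b 0 * y2 0\<bar> / eps \<le> S3 / eps / eps"
    using eps by (intro divide_right_mono) auto
  then show ?thesis using eps by (simp add: y3_def abs_divide power2_eq_square)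
qed

lemma rem3_bound: "x \<in> {0..1} \<Longrightarrow> \<bar>y3 x\<bar> \<le> Y3 * (eps + E x / eps\<^sup>2)"
proof -
  have "\<forall>x\<in>{0..1}. \<bar>y3 x\<bar> \<le> Y3 * (eps + exp (- beta * x / eps) / eps\<^sup>2)"
    unfolding Y3_def
  proof (rule first_order_layer_bound[OF eps(1) beta b_ge_all deriv_rem3])
    show "\<forall>x\<in>{0..1}. \<bar>r2 x - b2 x * y1 x - 2 * (b1 x * y2 x)\<bar>
        \<le> P3 * eps + R3 * exp (- beta * x / eps) / eps\<^sup>2"
      using rho2_bound by (auto simp: E_def)
  qed (use rem3_eq rem3_at_0 stage_consts_nonneg in auto)
  then show "x \<in> {0..1} \<Longrightarrow> ?thesis" by (simp add: E_def)
qed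

lemma rem4_bound: "x \<in> {0..1} \<Longrightarrow> \<bar>y4 x\<bar> \<le> Y4 * (1 + E x / eps ^ 3)"
proof -
  assume x: "x \<in> {0..1}"
  note nn = bounds_nonneg max_consts_nonneg stage_consts_nonneg
  have "\<bar>b x * y3 x\<bar> \<le> Bm * (Y3 * (eps + E x / eps\<^sup>2))"
    using b_bound[OF x] rem3_bound[OF x] by (intro abs_mult_le_mult) auto
  then have "\<bar>r2 x - b2 x * y1 x - 2 * (b1 x * y2 x) - b x * y3 x\<bar>
      \<le> P3 * eps + R3 * E x / eps\<^sup>2 + Bm * (Y3 * (eps + E x / eps\<^sup>2))"
    using rho2_bound[OF x] by (simp add: abs_triangle_ineq4[THEN order_trans])
  then have "\<bar>y4 x\<bar> \<le> (P3 * eps + R3 * E x / eps\<^sup>2 + Bm * (Y3 * (eps + E x / eps\<^sup>2))) / eps"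
    using eps by (simp add: y4_def abs_divide divide_right_mono)
  also have "\<dots> = (P3 + Bm * Y3) + (R3 + Bm * Y3) * (E x / eps ^ 3)"
    using eps by (simp add: field_simps power2_eq_square power3_eq_cube)
  also have "\<dots> \<le> Y4 + Y4 * (E x / eps ^ 3)"
    using E_le_E_div_eps[OF x] eps nn unfolding Y4_def by (intro add_mono mult_right_mono) auto
  finally show ?thesis by (simp add: algebra_simps)
qed

end

context layer_data
begin

definition Y_max :: real where "Y_max = Y2 + Y3 + Y4"

lemma remainder_derivative_bounds:
  assumes eps: "0 < eps" "eps < 1"
    and u: "deriv_on u du {0..1}" "deriv_on du ddu {0..1}" "continuous_on {0..1} ddu"
      "\<forall>x\<in>{0<..<1}. - eps * ddu x - b x * du x + c x * u x = f x" "u 0 = 0" "u 1 = 0"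
    and u0: "deriv_on u0 du0 {0..1}" "deriv_on du0 ddu0 {0..1}"
      "\<forall>x\<in>{0<..<1}. - b x * du0 x + c x * u0 x = f x" "u0 1 = 0"
  defines "K \<equiv> - eps * du 0 / b 0"
  defines "y \<equiv> \<lambda>x. u x - u0 x - K * exp (- b 0 * x / eps)"
    and "y1 \<equiv> \<lambda>x. du x - du0 x + K * (b 0 / eps) * exp (- b 0 * x / eps)"
    and "y2 \<equiv> \<lambda>x. ddu x - ddu0 x - K * (b 0 / eps)\<^sup>2 * exp (- b 0 * x / eps)"
  shows "\<exists>y3 y4. deriv_on y y1 {0..1} \<and> deriv_on y1 y2 {0..1} \<and> deriv_on y2 y3 {0..1}
    \<and> deriv_on y3 y4 {0..1} \<and> (\<forall>x\<in>{0..1}.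
      \<bar>y2 x\<bar> \<le> Y_max * (eps + exp (- beta * x / eps) / eps) \<and>
      \<bar>y3 x\<bar> \<le> Y_max * (eps + exp (- beta * x / eps) / eps\<^sup>2) \<and>
      \<bar>y4 x\<bar> \<le> Y_max * (1 + exp (- beta * x / eps) / eps ^ 3))"
proof -
  interpret S: layer_solution b b1 b2 c c1 c2 f U0 U1 U2 U3 U4 beta beta1 Bm Cm Fm Um eps u du ddu
    using eps u by unfold_locales auto
  have b_pos: "\<forall>x\<in>{0..1}. 0 < b x" using b_ge beta by (fastforce intro: less_le_trans)
  \<comment> \<open>the constants belong to the fixed reduced solution \<open>U0\<close>; by uniqueness \<open>u0\<close> is \<open>U0\<close>\<close>
  have "\<forall>x\<in>{0..1}. U0 x = u0 x"
    using reduced_solution_unique[OF deriv_b(1)[THEN deriv_on_continuous_on]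
        deriv_c(1)[THEN deriv_on_continuous_on] f_cont b_pos _ deriv_U(1,2) _ U0_at_1 u0]
      c_nonneg reduced_eq by auto
  then have U1: "\<forall>x\<in>{0..1}. U1 x = du0 x"
    using deriv_on_unique[OF deriv_on_cong[OF deriv_U(1)] u0(1)] by auto
  then have U2: "\<forall>x\<in>{0..1}. U2 x = ddu0 x"
    using deriv_on_unique[OF deriv_on_cong[OF deriv_U(2)] u0(2)] by auto
  have eq: "\<forall>x\<in>{0..1}. S.y x = y x" "\<forall>x\<in>{0..1}. S.y1 x = y1 x" "\<forall>x\<in>{0..1}. S.y2 x = y2 x"
    using \<open>\<forall>x\<in>{0..1}. U0 x = u0 x\<close> U1 U2
    by (auto simp: S.y_def S.y1_def S.y2_def y_def y1_def y2_def S.K_def K_def S.layer_def)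
  have "\<bar>y2 x\<bar> \<le> Y_max * (eps + exp (- beta * x / eps) / eps) \<and>
      \<bar>S.y3 x\<bar> \<le> Y_max * (eps + exp (- beta * x / eps) / eps\<^sup>2) \<and>
      \<bar>S.y4 x\<bar> \<le> Y_max * (1 + exp (- beta * x / eps) / eps ^ 3)" if x: "x \<in> {0..1}" for x
  proof -
    note nn = stage_consts_nonneg
    have E: "0 \<le> S.E x" "0 < eps" using S.E_bounds[OF x] eps by auto
    have "Y2 * (eps + S.E x / eps) \<le> Y_max * (eps + S.E x / eps)"
      "Y3 * (eps + S.E x / eps\<^sup>2) \<le> Y_max * (eps + S.E x / eps\<^sup>2)"
      "Y4 * (1 + S.E x / eps ^ 3) \<le> Y_max * (1 + S.E x / eps ^ 3)"
      using E nn unfolding Y_max_def by (intro mult_right_mono; simp)+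
    then show ?thesis using S.rem2_bound[OF x] S.rem3_bound[OF x] S.rem4_bound[OF x] eq x
      unfolding S.E_def by force
  qed
  moreover have "deriv_on y y1 {0..1}" "deriv_on y1 y2 {0..1}" "deriv_on y2 S.y3 {0..1}"
    using deriv_on_cong[OF S.deriv_rem(1) eq(1,2)] deriv_on_cong[OF S.deriv_rem(2) eq(2,3)]
      deriv_on_cong[OF S.deriv_rem2 eq(3)] by auto
  ultimately show ?thesis using S.deriv_rem3 by blast
qed

end

section \<open>The A-mesh\<close>

locale A_mesh =
  fixes a beta Q eps :: real and N J :: nat
  assumes a: "3 < a" and beta: "0 < beta" and Q: "0 < Q" "Q < 1" and eps: "0 < eps" "eps < 1"
    and N_large: "a / ((a - 3) * Q) \<le> real N" and J_eq: "real J = Q * real N"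
    and xi_le_Q: "mesh_xi a eps beta (1 / eps) \<le> Q"
begin

definition xi :: real where "xi = mesh_xi a eps beta (1 / eps)"
definition h :: real where "h = xi / real J"
definition H :: real where "H = (1 - xi) / real (N - J)"
definition X :: "nat \<Rightarrow> real" where "X = mesh_pt a eps beta (1 / eps) N J"

lemma xi_eq: "xi = a * eps / beta * ln (1 / eps)"
  by (simp add: xi_def mesh_xi_def)

lemma xi_bounds: "0 < xi" "xi \<le> Q" "xi < 1"
proof -
  have "0 < ln (1 / eps)" using eps by simp
  then show "0 < xi" unfolding xi_eq using a beta eps by simp
  show "xi \<le> Q" using xi_le_Q by (simp add: xi_def)
  then show "xi < 1" using Q by simp
qed

lemma J_large: "a / (a - 3) \<le> real J"
proof -
  have "Q * (a / ((a - 3) * Q)) \<le> Q * real N" using N_large Q by (intro mult_left_mono) auto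
  moreover have "Q * (a / ((a - 3) * Q)) = a / (a - 3)" using Q a by (simp add: field_simps)
  ultimately show ?thesis using J_eq by simp
qed

lemma J_bounds: "1 \<le> J" "J < N" "1 \<le> real N"
proof -
  have "1 < a / (a - 3)" using a by (simp add: field_simps)
  then show "1 \<le> J" using J_large by linarith
  then have "0 < Q * real N" using J_eq by simp
  then have N: "0 < real N" using Q by (simp add: zero_less_mult_iff)
  then have "real J < real N" using J_eq mult_strict_right_mono[of Q 1 "real N"] Q by simp
  then show "J < N" by simp
  then show "1 \<le> real N" by simp
qed

lemma N_minus_J: "real (N - J) = (1 - Q) * real N" "1 \<le> real (N - J)"
  using J_bounds J_eq by (auto simp: of_nat_diff algebra_simps)

lemma h_bounds: "0 < h" "h \<le> 1 / real N" "h \<le> xi"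
proof -
  show "0 < h" using xi_bounds J_bounds by (simp add: h_def)
  have "xi / real J \<le> Q / real J" using xi_bounds J_bounds by (simp add: divide_right_mono)
  moreover have "Q / real J = 1 / real N" using J_eq Q J_bounds by (simp add: field_simps)
  ultimately show "h \<le> 1 / real N" by (simp add: h_def)
  have "xi / real J \<le> xi / 1" using xi_bounds J_bounds by (intro divide_left_mono) auto
  then show "h \<le> xi" by (simp add: h_def)
qed

lemma H_bounds: "0 < H" "H \<le> 1" "H \<le> 1 / ((1 - Q) * real N)" "1 / real N \<le> H" "h \<le> H"
proof -
  show "0 < H" "H \<le> 1" using xi_bounds N_minus_J by (auto simp: H_def divide_le_eq)
  show "H \<le> 1 / ((1 - Q) * real N)"
    unfolding H_def N_minus_J using xi_bounds Q J_bounds by (simp add: divide_right_mono)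
  have "(1 - Q) / ((1 - Q) * real N) \<le> (1 - xi) / ((1 - Q) * real N)"
    using xi_bounds Q J_bounds by (intro divide_right_mono) auto
  then show "1 / real N \<le> H" unfolding H_def N_minus_J using Q by simp
  then show "h \<le> H" using h_bounds by linarith
qed

lemma X_fine: "i \<le> J \<Longrightarrow> X i = real i * h"
  by (simp add: X_def mesh_pt_def h_def xi_def Let_def)

lemma X_coarse: "J \<le> i \<Longrightarrow> X i = xi + real (i - J) * H"
  using J_bounds by (cases "i = J") (simp_all add: X_def mesh_pt_def H_def xi_def Let_def)

text \<open>Since \<open>J \<ge> a / (a - 3)\<close>, even one fine step before the transition point the layer
  term has decayed to \<open>eps\<^sup>3\<close>; this is where \<open>a > 3\<close> is used.\<close>

lemma layer_decayed: "xi - h \<le> t \<Longrightarrow> exp (- beta * t / eps) \<le> eps ^ 3"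
proof -
  assume t: "xi - h \<le> t"
  define L where "L = ln (1 / eps)"
  have L: "L > 0" using eps by (simp add: L_def)
  have J: "real J > 0" using J_bounds by simp
  have "1 / real J \<le> (a - 3) / a" using a J_large J by (simp add: field_simps)
  then have "a * (1 / real J) \<le> a - 3" using a by (simp add: field_simps)
  then have "3 * L \<le> a * (1 - 1 / real J) * L" using L
    by (intro mult_right_mono) (auto simp: algebra_simps)
  also have "a * (1 - 1 / real J) * L = beta * (xi - h) / eps"
    using beta eps J by (simp add: xi_eq h_def L_def field_simps)
  also have "\<dots> \<le> beta * t / eps" using beta eps t by (intro divide_right_mono mult_left_mono) auto
  finally have "exp (- beta * t / eps) \<le> exp (- (3 * L))" by simp
  also have "- (3 * L) = real 3 * ln eps" using eps by (simp add: L_def ln_div)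
  also have "exp (real 3 * ln eps) = eps ^ 3" using exp_of_nat_mult[of 3 "ln eps"] eps by simp
  finally show ?thesis .
qed

lemma h_over_eps_sq: "(h / eps)\<^sup>2 = (a / (beta * Q))\<^sup>2 * ((ln eps)\<^sup>2 * real N powr (-2))"
proof -
  have "h / eps = a / (beta * Q) * ln (1 / eps) / real N"
    unfolding h_def xi_eq J_eq using eps Q beta J_bounds by (simp add: field_simps)
  moreover have "(ln (1 / eps))\<^sup>2 = (ln eps)\<^sup>2" using eps by (simp add: ln_div)
  moreover have "real N powr (-2) = 1 / (real N)\<^sup>2"
    using J_bounds by (simp add: powr_minus powr_realpow divide_inverse)
  ultimately show ?thesis by (simp add: power2_eq_square field_simps)
qed

lemma H_min_eps_H: "H * min eps H \<le> min eps (1 / real N) / real N / (1 - Q)\<^sup>2"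
proof -
  have q: "0 < 1 - Q" "1 - Q \<le> 1" using Q by auto
  have "min eps H \<le> min eps (1 / real N) / (1 - Q)"
  proof (cases "eps \<le> 1 / real N")
    case True
    have "eps \<le> eps / (1 - Q)" using q eps by (simp add: le_divide_eq mult_left_le_one_le)
    then show ?thesis using True by (simp add: min_def)
  next
    case False
    have "H \<le> (1 / real N) / (1 - Q)" using H_bounds(3) by (simp add: field_simps)
    then show ?thesis using False by (simp add: min_def)
  qed
  then have "H * min eps H \<le> (1 / ((1 - Q) * real N)) * (min eps (1 / real N) / (1 - Q))"
    using H_bounds eps q J_bounds by (intro mult_mono) auto
  also have "\<dots> = min eps (1 / real N) / real N / (1 - Q)\<^sup>2"
    by (simp add: field_simps power2_eq_square)
  finally show ?thesis .
qed

lemma eps_H_sq_le: "eps * H\<^sup>2 \<le> H * min eps H"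
proof -
  have "eps * H \<le> eps" using eps H_bounds by (simp add: mult_left_le)
  moreover have "eps * H \<le> H" using eps H_bounds mult_left_le_one_le[of H eps] by simp
  ultimately have "eps * H \<le> min eps H" by simp
  then have "H * (eps * H) \<le> H * min eps H" using H_bounds by (intro mult_left_mono) auto
  then show ?thesis by (simp add: power2_eq_square algebra_simps)
qed

lemma fine_mesh_geometry:
  assumes "1 \<le> i" "i \<le> J - 1"
  shows "X (i + 1) = X i + h" "X (i - 1) = X i - h" "0 \<le> X i - h" "X i + h \<le> xi"
proof -
  have i: "i + 1 \<le> J" using assms J_bounds by linarith
  have Xi: "X i = real i * h" using X_fine i by auto
  show "X (i + 1) = X i + h" using X_fine[OF i] Xi by (simp add: algebra_simps)
  show "X (i - 1) = X i - h" using X_fine[of "i - 1"] Xi assms i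
    by (simp add: of_nat_diff algebra_simps)
  show "0 \<le> X i - h" using Xi assms h_bounds by (simp add: algebra_simps mult_right_mono)
  have "X i + h = real (i + 1) * h" using Xi by (simp add: algebra_simps)
  also have "\<dots> \<le> real J * h" using i h_bounds by (intro mult_right_mono) auto
  also have "real J * h = xi" using J_bounds by (simp add: h_def)
  finally show "X i + h \<le> xi" .
qed

lemma transition_geometry:
  "X (J + 1) = X J + H" "X (J - 1) = X J - h" "X J = xi" "0 \<le> xi - h" "xi + H \<le> 1"
proof -
  show XJ: "X J = xi" using X_coarse[of J] by simp
  show "X (J + 1) = X J + H" using X_coarse[of "J + 1"] XJ by simp
  have "X (J - 1) = real J * h - h" using X_fine[of "J - 1"] J_bounds
    by (simp add: of_nat_diff algebra_simps)
  then show "X (J - 1) = X J - h" using XJ J_bounds by (simp add: h_def)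
  show "0 \<le> xi - h" using h_bounds by simp
  have "(1 - xi) / real (N - J) \<le> (1 - xi) / 1"
    using xi_bounds N_minus_J by (intro divide_left_mono) auto
  then show "xi + H \<le> 1" by (simp add: H_def)
qed

lemma coarse_mesh_geometry:
  assumes "J + 1 \<le> i" "i \<le> N - 1"
  shows "X (i + 1) = X i + H" "X (i - 1) = X i - H" "xi \<le> X i - H" "X i + H \<le> 1"
proof -
  have Xi: "X i = xi + real (i - J) * H" using X_coarse assms by auto
  have r: "real (i + 1 - J) = real (i - J) + 1" "real (i - 1 - J) = real (i - J) - 1"
    using assms by (auto simp: of_nat_diff)
  have "J \<le> i + 1" "J \<le> i - 1" using assms by auto
  from this[THEN X_coarse] show "X (i + 1) = X i + H" and Xm: "X (i - 1) = X i - H"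
    using Xi r by (simp_all add: algebra_simps)
  show "xi \<le> X i - H" using Xm X_coarse[OF \<open>J \<le> i - 1\<close>] H_bounds by simp
  have "X i + H = xi + real (i + 1 - J) * H" using Xi assms by (simp add: of_nat_diff algebra_simps)
  also have "\<dots> \<le> xi + real (N - J) * H" using assms H_bounds
    by (intro add_left_mono mult_right_mono) auto
  also have "\<dots> = 1" using N_minus_J(2) by (simp add: H_def)
  finally show "X i + H \<le> 1" .
qed

end

text \<open>The sum of the constants of \<open>fine_mesh_error\<close>, \<open>transition_point_error\<close> and
  \<open>coarse_mesh_error\<close> below.\<close>

definition asi_error_const :: "real \<Rightarrow> real \<Rightarrow> real \<Rightarrow> real \<Rightarrow> real \<Rightarrow> real" where
  "asi_error_const a beta Q Bm Y = (4 * Bm\<^sup>2 + 4 + 2 * Bm) * Y * (a / (beta * Q))\<^sup>2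
    + (Y * (2 * (2 * Bm\<^sup>2 + 1 + Bm) + 2 * Bm) / (1 - Q)\<^sup>2 + 8 * Y / (1 - Q))
    + Y * (2 * (2 * Bm\<^sup>2 + 1 + Bm) + 4 + 2 * Bm) / (1 - Q)\<^sup>2"

locale A_mesh_remainder = A_mesh +
  fixes b y y1 y2 y3 y4 :: "real \<Rightarrow> real" and Bm Y :: real
  assumes b: "\<And>x. x \<in> {0..1} \<Longrightarrow> 0 < b x \<and> b x \<le> Bm" and Y: "0 \<le> Y"
    and deriv: "deriv_on y y1 {0..1}" "deriv_on y1 y2 {0..1}" "deriv_on y2 y3 {0..1}"
      "deriv_on y3 y4 {0..1}"
    and y_bounds: "\<And>x. x \<in> {0..1} \<Longrightarrow>
      \<bar>y2 x\<bar> \<le> Y * (eps + exp (- beta * x / eps) / eps) \<and>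
      \<bar>y3 x\<bar> \<le> Y * (eps + exp (- beta * x / eps) / eps\<^sup>2) \<and>
      \<bar>y4 x\<bar> \<le> Y * (1 + exp (- beta * x / eps) / eps ^ 3)"
begin

lemma derivative_bounds_outside_layer:
  assumes "xi - h \<le> t" "t \<le> 1"
  shows "\<bar>y2 t\<bar> \<le> 2 * Y * eps \<and> \<bar>y3 t\<bar> \<le> 2 * Y * eps \<and> \<bar>y4 t\<bar> \<le> 2 * Y"
proof -
  define E where "E = exp (- beta * t / eps)"
  have t: "t \<in> {0..1}" using assms h_bounds by auto
  have E: "0 \<le> E" "E \<le> eps ^ 3" using layer_decayed[OF assms(1)] by (auto simp: E_def)
  have "E / eps \<le> eps" "E / eps\<^sup>2 \<le> eps" "E / eps ^ 3 \<le> 1"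
    using E eps by (auto simp: divide_le_eq power2_eq_square power3_eq_cube mult_le_one
        intro: order_trans[OF _ mult_left_le])
  then have "Y * (eps + E / eps) \<le> Y * (2 * eps)" "Y * (eps + E / eps\<^sup>2) \<le> Y * (2 * eps)"
    "Y * (1 + E / eps ^ 3) \<le> Y * 2"
    using Y by (intro mult_left_mono; simp)+
  then show ?thesis using y_bounds[OF t] unfolding E_def by (simp add: algebra_simps)
qed

lemma derivative_bounds:
  assumes t: "t \<in> {0..1}"
  shows "\<bar>y2 t\<bar> \<le> 2 * Y / eps \<and> \<bar>y3 t\<bar> \<le> 2 * Y / eps\<^sup>2 \<and> \<bar>y4 t\<bar> \<le> 2 * Y / eps ^ 3"
proof -
  define E where "E = exp (- beta * t / eps)"
  have E: "0 \<le> E" "E \<le> 1" using t beta eps by (auto simp: E_def)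
  have "eps * eps \<le> 1" "eps ^ 3 \<le> 1" using eps by (auto simp: mult_le_one power_le_one)
  then have "eps \<le> 1 / eps" "eps \<le> 1 / eps\<^sup>2" "1 \<le> 1 / eps ^ 3"
    using eps by (simp_all add: le_divide_eq power2_eq_square power3_eq_cube mult.assoc)
  moreover have "E / eps \<le> 1 / eps" "E / eps\<^sup>2 \<le> 1 / eps\<^sup>2" "E / eps ^ 3 \<le> 1 / eps ^ 3"
    using E eps by (auto intro: divide_right_mono)
  ultimately have "Y * (eps + E / eps) \<le> Y * (2 / eps)" "Y * (eps + E / eps\<^sup>2) \<le> Y * (2 / eps\<^sup>2)"
    "Y * (1 + E / eps ^ 3) \<le> Y * (2 / eps ^ 3)"
    using Y by (intro mult_left_mono; simp)+
  moreover have "Y * (2 / eps) = 2 * Y / eps" "Y * (2 / eps\<^sup>2) = 2 * Y / eps\<^sup>2"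
    "Y * (2 / eps ^ 3) = 2 * Y / eps ^ 3" by simp_all
  ultimately show ?thesis using y_bounds[OF t] unfolding E_def by linarith
qed

text \<open>Inside the layer the derivative bounds blow up like powers of \<open>1 / eps\<close>, but the
  uniform step \<open>h\<close> satisfies \<open>h / eps = O(ln (1 / eps) / N)\<close>.\<close>

lemma fine_mesh_error:
  assumes i: "1 \<le> i" "i \<le> J - 1"
  shows "\<bar>tau eps b X y y1 y2 i\<bar>
    \<le> (4 * Bm\<^sup>2 + 4 + 2 * Bm) * Y * (a / (beta * Q))\<^sup>2 * ((ln eps)\<^sup>2 * real N powr (-2))"
proof -
  note geo = fine_mesh_geometry[OF i]
  have Xi: "X i \<in> {0..1}" using geo xi_bounds h_bounds by auto
  define bx where "bx = b (X i)"
  define r where "r = bx * h / (2 * eps)"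
  have bx: "0 < bx" "bx \<le> Bm" using b[OF Xi] by (auto simp: bx_def)
  have r: "r > 0" using bx h_bounds eps by (simp add: r_def)
  have "\<bar>tau eps b X y y1 y2 i\<bar> \<le> eps * \<bar>1 - sigma r - r\<bar> * (2 * Y / eps)
      + eps * sigma r * (2 * (2 * Y / eps ^ 3) * h\<^sup>2) + bx * ((2 * Y / eps\<^sup>2) * h\<^sup>2)"
    unfolding r_def bx_def
    using derivative_bounds geo xi_bounds h_bounds Xi eps bx
    by (intro tau_uniform_bound[OF deriv i(1) geo(1,2)]) (auto simp: bx_def)
  also have "\<dots> \<le> 4 * Bm\<^sup>2 * Y * (h / eps)\<^sup>2 + 4 * Y * (h / eps)\<^sup>2 + 2 * Bm * Y * (h / eps)\<^sup>2"
  proof (intro add_mono)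
    have "eps * \<bar>1 - sigma r - r\<bar> * (2 * Y / eps) = 2 * Y * \<bar>1 - sigma r - r\<bar>" using eps by simp
    also have "\<dots> \<le> 2 * Y * (8 * r\<^sup>2)" using sigma_expansion_error[OF r] Y
      by (intro mult_left_mono) auto
    also have "\<dots> = 4 * Y * bx\<^sup>2 * (h / eps)\<^sup>2" by (simp add: r_def power2_eq_square field_simps)
    also have "\<dots> \<le> 4 * Y * Bm\<^sup>2 * (h / eps)\<^sup>2"
      using bx Y by (intro mult_right_mono mult_left_mono power_mono) auto
    finally show "eps * \<bar>1 - sigma r - r\<bar> * (2 * Y / eps) \<le> 4 * Bm\<^sup>2 * Y * (h / eps)\<^sup>2"
      by (simp add: algebra_simps)
    have "eps * sigma r * (2 * (2 * Y / eps ^ 3) * h\<^sup>2) = sigma r * (4 * Y * (h / eps)\<^sup>2)"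
      using eps by (simp add: field_simps power2_eq_square power3_eq_cube)
    also have "\<dots> \<le> 4 * Y * (h / eps)\<^sup>2" using sigma_pos_le_1[OF r] Y
      by (simp add: mult_left_le_one_le)
    finally show "eps * sigma r * (2 * (2 * Y / eps ^ 3) * h\<^sup>2) \<le> 4 * Y * (h / eps)\<^sup>2" .
    have "bx * ((2 * Y / eps\<^sup>2) * h\<^sup>2) = bx * (2 * Y * (h / eps)\<^sup>2)"
      by (simp add: power2_eq_square field_simps)
    also have "\<dots> \<le> Bm * (2 * Y * (h / eps)\<^sup>2)" using bx Y by (intro mult_right_mono) auto
    finally show "bx * ((2 * Y / eps\<^sup>2) * h\<^sup>2) \<le> 2 * Bm * Y * (h / eps)\<^sup>2"
      by (simp add: algebra_simps)
  qed
  also have "\<dots> = (4 * Bm\<^sup>2 + 4 + 2 * Bm) * Y * (a / (beta * Q))\<^sup>2 * ((ln eps)\<^sup>2 * real N powr (-2))"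
    unfolding h_over_eps_sq by (simp add: algebra_simps)
  finally show ?thesis .
qed

lemma coarse_step_terms:
  assumes bx: "0 < bx" "bx \<le> Bm"
  defines "r \<equiv> bx * H / (2 * eps)"
  shows "eps * \<bar>1 - sigma r - r\<bar> * (2 * Y * eps) \<le> 2 * Y * (2 * Bm\<^sup>2 + 1 + Bm) * (H * min eps H)"
    and "bx * ((2 * Y * eps) * H\<^sup>2) \<le> 2 * Y * Bm * (H * min eps H)"
proof -
  have "eps * \<bar>1 - sigma r - r\<bar> * (2 * Y * eps) = 2 * Y * (eps\<^sup>2 * \<bar>1 - sigma r - r\<bar>)"
    by (simp add: power2_eq_square algebra_simps)
  also have "\<dots> \<le> 2 * Y * ((2 * Bm\<^sup>2 + 1 + Bm) * H * min eps H)"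
    using sigma_defect_bound[OF eps(1) bx H_bounds(1,2)] Y unfolding r_def
    by (intro mult_left_mono) auto
  finally show "eps * \<bar>1 - sigma r - r\<bar> * (2 * Y * eps)
      \<le> 2 * Y * (2 * Bm\<^sup>2 + 1 + Bm) * (H * min eps H)"
    by (simp add: algebra_simps)
  have "bx * ((2 * Y * eps) * H\<^sup>2) = 2 * Y * bx * (eps * H\<^sup>2)" by (simp add: algebra_simps)
  also have "\<dots> \<le> 2 * Y * Bm * (H * min eps H)"
  proof (rule mult_mono[OF _ eps_H_sq_le])
    show "2 * Y * bx \<le> 2 * Y * Bm" using bx Y by (intro mult_left_mono) auto
  qed (use bx Y eps in auto)
  finally show "bx * ((2 * Y * eps) * H\<^sup>2) \<le> 2 * Y * Bm * (H * min eps H)" .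
qed

lemma transition_point_error:
  "\<bar>tau eps b X y y1 y2 J\<bar> \<le> (Y * (2 * (2 * Bm\<^sup>2 + 1 + Bm) + 2 * Bm) / (1 - Q)\<^sup>2 + 8 * Y / (1 - Q))
    * (min eps (1 / real N) / real N + eps\<^sup>2 / real N)"
proof -
  note geo = transition_geometry
  have xi: "xi \<in> {0..1}" using xi_bounds by auto
  define bx where "bx = b xi"
  define r where "r = bx * H / (2 * eps)"
  define K where "K = 2 * (2 * Bm\<^sup>2 + 1 + Bm) + 2 * Bm"
  define u where "u = min eps (1 / real N) / real N"
  define v where "v = eps\<^sup>2 / real N"
  have bx: "0 < bx" "bx \<le> Bm" using b[OF xi] by (auto simp: bx_def)
  have r: "r > 0" using bx H_bounds eps by (simp add: r_def)
  have "\<bar>tau eps b X y y1 y2 J\<bar> \<le> eps * \<bar>1 - sigma r - r\<bar> * (2 * Y * eps)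
      + eps * sigma r * (2 * (2 * Y * eps) * (H + h)) + bx * ((2 * Y * eps) * H\<^sup>2)"
    unfolding r_def bx_def
    using derivative_bounds_outside_layer geo eps bx xi_bounds h_bounds H_bounds J_bounds
    by (intro tau_nonuniform_bound[OF deriv(1-3) _ geo(1,2), unfolded geo(3)]) (auto simp: bx_def)
  also have "\<dots> \<le> 2 * Y * (2 * Bm\<^sup>2 + 1 + Bm) * (H * min eps H) + 8 * Y * (eps\<^sup>2 * H)
      + 2 * Y * Bm * (H * min eps H)"
  proof (intro add_mono)
    have "eps * sigma r * (2 * (2 * Y * eps) * (H + h)) = sigma r * (4 * Y * eps\<^sup>2 * (H + h))"
      by (simp add: power2_eq_square algebra_simps)
    also have "\<dots> \<le> 4 * Y * eps\<^sup>2 * (H + h)"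
      using sigma_pos_le_1[OF r] Y H_bounds h_bounds by (simp add: mult_left_le_one_le)
    also have "\<dots> \<le> 4 * Y * eps\<^sup>2 * (2 * H)" using H_bounds Y by (intro mult_left_mono) auto
    finally show "eps * sigma r * (2 * (2 * Y * eps) * (H + h)) \<le> 8 * Y * (eps\<^sup>2 * H)"
      by (simp add: algebra_simps)
  qed (use coarse_step_terms[OF bx] in \<open>simp_all add: r_def\<close>)
  also have "\<dots> = Y * K * (H * min eps H) + 8 * Y * (eps\<^sup>2 * H)"
    by (simp add: K_def algebra_simps)
  also have "\<dots> \<le> Y * K * (u / (1 - Q)\<^sup>2) + 8 * Y * (v / (1 - Q))"
  proof (intro add_mono mult_left_mono)
    have "H \<le> 1 / real N / (1 - Q)" using H_bounds(3) by (simp add: field_simps)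
    then have "eps\<^sup>2 * H \<le> eps\<^sup>2 * (1 / real N / (1 - Q))" by (intro mult_left_mono) auto
    then show "eps\<^sup>2 * H \<le> v / (1 - Q)" by (simp add: v_def)
  qed (use H_min_eps_H Y bx in \<open>auto simp: K_def u_def\<close>)
  also have "\<dots> = Y * K / (1 - Q)\<^sup>2 * u + 8 * Y / (1 - Q) * v" by simp
  also have "\<dots> \<le> Y * K / (1 - Q)\<^sup>2 * (u + v) + 8 * Y / (1 - Q) * (u + v)"
  proof -
    have "0 \<le> Bm" using bx by simp
    then have "0 \<le> Y * K / (1 - Q)\<^sup>2" "0 \<le> 8 * Y / (1 - Q)" using Y Q by (simp_all add: K_def)
    moreover have "0 \<le> u" "0 \<le> v" using eps J_bounds by (simp_all add: u_def v_def)
    ultimately show ?thesis by (intro add_mono mult_left_mono) auto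
  qed
  finally show ?thesis unfolding K_def u_def v_def by (simp add: distrib_right)
qed

lemma coarse_mesh_error:
  assumes i: "J + 1 \<le> i" "i \<le> N - 1"
  shows "\<bar>tau eps b X y y1 y2 i\<bar>
    \<le> Y * (2 * (2 * Bm\<^sup>2 + 1 + Bm) + 4 + 2 * Bm) / (1 - Q)\<^sup>2 * (min eps (1 / real N) / real N)"
proof -
  note geo = coarse_mesh_geometry[OF i]
  have Xi: "X i \<in> {0..1}" using geo xi_bounds H_bounds by auto
  define bx where "bx = b (X i)"
  define r where "r = bx * H / (2 * eps)"
  have bx: "0 < bx" "bx \<le> Bm" using b[OF Xi] by (auto simp: bx_def)
  have r: "r > 0" using bx H_bounds eps by (simp add: r_def)
  have "\<bar>tau eps b X y y1 y2 i\<bar> \<le> eps * \<bar>1 - sigma r - r\<bar> * (2 * Y * eps)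
      + eps * sigma r * (2 * (2 * Y) * H\<^sup>2) + bx * ((2 * Y * eps) * H\<^sup>2)"
    unfolding r_def bx_def
    using derivative_bounds_outside_layer geo eps bx xi_bounds h_bounds H_bounds i
    by (intro tau_uniform_bound[OF deriv _ geo(1,2)]) (auto simp: bx_def)
  also have "\<dots> \<le> 2 * Y * (2 * Bm\<^sup>2 + 1 + Bm) * (H * min eps H) + 4 * Y * (H * min eps H)
      + 2 * Y * Bm * (H * min eps H)"
  proof (intro add_mono)
    have "eps * sigma r * (2 * (2 * Y) * H\<^sup>2) = sigma r * (4 * Y * (eps * H\<^sup>2))"
      by (simp add: algebra_simps)
    also have "\<dots> \<le> 4 * Y * (eps * H\<^sup>2)"
      using sigma_pos_le_1[OF r] Y eps by (simp add: mult_left_le_one_le)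
    also have "\<dots> \<le> 4 * Y * (H * min eps H)" using eps_H_sq_le Y by (intro mult_left_mono) auto
    finally show "eps * sigma r * (2 * (2 * Y) * H\<^sup>2) \<le> 4 * Y * (H * min eps H)" .
  qed (use coarse_step_terms[OF bx] in \<open>simp_all add: r_def\<close>)
  also have "\<dots> = Y * (2 * (2 * Bm\<^sup>2 + 1 + Bm) + 4 + 2 * Bm) * (H * min eps H)"
    by (simp add: algebra_simps)
  also have "\<dots> \<le> Y * (2 * (2 * Bm\<^sup>2 + 1 + Bm) + 4 + 2 * Bm)
      * (min eps (1 / real N) / real N / (1 - Q)\<^sup>2)"
    using H_min_eps_H Y bx by (intro mult_left_mono) auto
  finally show ?thesis by (simp add: field_simps)
qed

lemma truncation_error_bounds:
  "(\<forall>i. 1 \<le> i \<and> i \<le> J - 1 \<longrightarrow>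
      \<bar>tau eps b X y y1 y2 i\<bar> \<le> asi_error_const a beta Q Bm Y * ((ln eps)\<^sup>2 * real N powr (-2))) \<and>
    \<bar>tau eps b X y y1 y2 J\<bar>
      \<le> asi_error_const a beta Q Bm Y * (min eps (1 / real N) / real N + eps\<^sup>2 / real N) \<and>
    (\<forall>i. J + 1 \<le> i \<and> i \<le> N - 1 \<longrightarrow>
      \<bar>tau eps b X y y1 y2 i\<bar> \<le> asi_error_const a beta Q Bm Y * (min eps (1 / real N) / real N))"
proof -
  define Cf where "Cf = (4 * Bm\<^sup>2 + 4 + 2 * Bm) * Y * (a / (beta * Q))\<^sup>2"
  define CJ where "CJ = Y * (2 * (2 * Bm\<^sup>2 + 1 + Bm) + 2 * Bm) / (1 - Q)\<^sup>2 + 8 * Y / (1 - Q)"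
  define Cc where "Cc = Y * (2 * (2 * Bm\<^sup>2 + 1 + Bm) + 4 + 2 * Bm) / (1 - Q)\<^sup>2"
  have "0 \<le> Bm" using b[of 0] by simp
  then have C: "0 \<le> Cf" "0 \<le> CJ" "0 \<le> Cc" using Y Q by (simp_all add: Cf_def CJ_def Cc_def)
  have "Ck * t \<le> asi_error_const a beta Q Bm Y * t" if "Ck \<in> {Cf, CJ, Cc}" "0 \<le> t" for Ck t
    using that C unfolding asi_error_const_def Cf_def[symmetric] CJ_def[symmetric] Cc_def[symmetric]
    by (intro mult_right_mono) auto
  moreover have "0 \<le> (ln eps)\<^sup>2 * real N powr (-2)" "0 \<le> min eps (1 / real N) / real N"
    "0 \<le> eps\<^sup>2 / real N"
    using eps by auto
  ultimately show ?thesis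
    using fine_mesh_error transition_point_error coarse_mesh_error
    unfolding Cf_def CJ_def Cc_def by (meson add_nonneg_nonneg insertI1 insertI2 order_trans)
qed
end

lemma layer_data_exists:
  fixes b c f W0 dW0 ddW0 :: "real \<Rightarrow> real" and beta :: real
  assumes smooth: "smooth_on 4 {0..1} b" "smooth_on 4 {0..1} c" "smooth_on 4 {0..1} f"
    and beta: "0 < beta" and b: "\<forall>x\<in>{0..1}. beta < b x" and c: "\<forall>x\<in>{0..1}. 0 \<le> c x"
    and W0: "deriv_on W0 dW0 {0..1}" "deriv_on dW0 ddW0 {0..1}"
      "\<forall>x\<in>{0<..<1}. - b x * dW0 x + c x * W0 x = f x" "W0 1 = 0"
  shows "\<exists>b1 b2 c1 c2 U0 U1 U2 U3 U4 beta1 Bm Cm Fm Um.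
    layer_data b b1 b2 c c1 c2 f U0 U1 U2 U3 U4 beta beta1 Bm Cm Fm Um"
proof -
  obtain Db Bm where Db: "Db 0 = b" "\<forall>j<4. deriv_on (Db j) (Db (Suc j)) {0..1}"
    "\<forall>j\<le>4. \<forall>x\<in>{0..1}. \<bar>Db j x\<bar> \<le> Bm"
    using smooth_on_derivs_bounded[OF smooth(1) compact_Icc] by blast
  obtain Dc Cm where Dc: "Dc 0 = c" "\<forall>j<4. deriv_on (Dc j) (Dc (Suc j)) {0..1}"
    "\<forall>j\<le>4. \<forall>x\<in>{0..1}. \<bar>Dc j x\<bar> \<le> Cm"
    using smooth_on_derivs_bounded[OF smooth(2) compact_Icc] by blast
  have f_cont: "continuous_on {0..1} f" using smooth_on_continuous_on[OF smooth(3)] .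
  obtain Fm where Fm: "\<forall>x\<in>{0..1}. \<bar>f x\<bar> \<le> Fm"
    using continuous_on_abs_bounded[OF f_cont compact_Icc] by auto
  have b0: "\<forall>x\<in>{0..1}. b x \<noteq> 0" using b beta by force
  have "smooth_on 5 {0..1} W0"
    using reduced_solution_smooth[OF smooth b0 W0(1) deriv_on_continuous_on[OF W0(2)] W0(3)] by simp
  then obtain U Um where U: "U 0 = W0" "\<forall>j<5. deriv_on (U j) (U (Suc j)) {0..1}"
    "\<forall>j\<le>5. \<forall>x\<in>{0..1}. \<bar>U j x\<bar> \<le> Um"
    using smooth_on_derivs_bounded[OF _ compact_Icc] by blast
  obtain beta1 where beta1: "beta < beta1" "\<forall>x\<in>{0..1}. beta1 \<le> b x"
  proof -
    obtain m where "m \<in> {0..1}" "\<forall>x\<in>{0..1}. b m \<le> b x"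
      using continuous_attains_inf[OF _ _ smooth_on_continuous_on[OF smooth(1)]] by auto
    then show ?thesis using b that by blast
  qed
  have "\<forall>x\<in>{0..1}. U 1 x = dW0 x"
    using deriv_on_unique[of W0 "U 1" 0 1 dW0] U W0(1) by auto
  then have "\<forall>x\<in>{0..1}. - b x * U 1 x + c x * U 0 x = f x"
    using reduced_solution_deriv_eq[OF smooth(1-3)[THEN smooth_on_continuous_on] b0 W0(1)
        deriv_on_continuous_on[OF W0(2)] W0(3)] b0 U(1) by (auto simp: field_simps)
  then have "layer_data b (Db 1) (Db 2) c (Dc 1) (Dc 2) f (U 0) (U 1) (U 2) (U 3) (U 4)
      beta beta1 Bm Cm Fm Um"
    using beta beta1 c Db Dc f_cont Fm U W0(4)
    by unfold_locales (auto simp: numeral_eq_Suc)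
  then show ?thesis by blast
qed

context layer_data
begin

lemma remainder_truncation_error:
  assumes a: "3 < a" and Q: "0 < Q" "Q < 1"
    and eps: "0 < eps" "eps < 1"
    and u: "deriv_on u du {0..1}" "deriv_on du ddu {0..1}" "continuous_on {0..1} ddu"
      "\<forall>x\<in>{0<..<1}. - eps * ddu x - b x * du x + c x * u x = f x" "u 0 = 0" "u 1 = 0"
    and u0: "deriv_on u0 du0 {0..1}" "deriv_on du0 ddu0 {0..1}"
      "\<forall>x\<in>{0<..<1}. - b x * du0 x + c x * u0 x = f x" "u0 1 = 0"
    and mesh: "nat \<lceil>a / ((a - 3) * Q)\<rceil> \<le> N" "real J = Q * real N" "mesh_xi a eps beta (1 / eps) \<le> Q"
  defines "K \<equiv> - eps * du 0 / b 0"
  defines "y \<equiv> \<lambda>x. u x - u0 x - K * exp (- b 0 * x / eps)"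
    and "y1 \<equiv> \<lambda>x. du x - du0 x + K * (b 0 / eps) * exp (- b 0 * x / eps)"
    and "y2 \<equiv> \<lambda>x. ddu x - ddu0 x - K * (b 0 / eps)\<^sup>2 * exp (- b 0 * x / eps)"
  shows "(\<forall>i. 1 \<le> i \<and> i \<le> J - 1 \<longrightarrow> \<bar>tau eps b (mesh_pt a eps beta (1 / eps) N J) y y1 y2 i\<bar>
      \<le> asi_error_const a beta Q Bm Y_max * ((ln eps)\<^sup>2 * real N powr (-2))) \<and>
    \<bar>tau eps b (mesh_pt a eps beta (1 / eps) N J) y y1 y2 J\<bar>
      \<le> asi_error_const a beta Q Bm Y_max * (min eps (1 / real N) / real N + eps\<^sup>2 / real N) \<and>
    (\<forall>i. J + 1 \<le> i \<and> i \<le> N - 1 \<longrightarrow> \<bar>tau eps b (mesh_pt a eps beta (1 / eps) N J) y y1 y2 i\<bar>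
      \<le> asi_error_const a beta Q Bm Y_max * (min eps (1 / real N) / real N))"
proof -
  obtain y3 y4 where "deriv_on y y1 {0..1}" "deriv_on y1 y2 {0..1}" "deriv_on y2 y3 {0..1}"
    "deriv_on y3 y4 {0..1}" "\<forall>x\<in>{0..1}.
      \<bar>y2 x\<bar> \<le> Y_max * (eps + exp (- beta * x / eps) / eps) \<and>
      \<bar>y3 x\<bar> \<le> Y_max * (eps + exp (- beta * x / eps) / eps\<^sup>2) \<and>
      \<bar>y4 x\<bar> \<le> Y_max * (1 + exp (- beta * x / eps) / eps ^ 3)"
    using remainder_derivative_bounds[OF eps u u0] unfolding K_def y_def y1_def y2_def by blast
  moreover have "\<forall>x\<in>{0..1}. 0 < b x \<and> b x \<le> Bm"
    using b_ge beta b_bound by (fastforce dest: abs_le_D1 intro: less_le_trans)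
  moreover have "0 \<le> Y_max" using stage_consts_nonneg by (simp add: Y_max_def)
  ultimately interpret M: A_mesh_remainder a beta Q eps N J b y y1 y2 y3 y4 Bm Y_max
    using a beta Q eps mesh by unfold_locales (auto simp: nat_le_iff ceiling_le_iff)
  show ?thesis using M.truncation_error_bounds unfolding M.X_def .
qed

end

theorem lemma4:
  fixes b c f :: "real \<Rightarrow> real" and beta a Q :: real
  assumes b_C4: "Ck_on 4 {0..1} b" and c_C4: "Ck_on 4 {0..1} c" and f_C4: "Ck_on 4 {0..1} f"
    and beta_pos: "beta > 0" and b_gt: "\<forall>x\<in>{0..1}. b x > beta"
    and c_nonneg: "\<forall>x\<in>{0..1}. c x \<ge> 0"
    and Q_rat: "Q \<in> \<rat>" and Q_pos: "0 < Q" and Q_lt1: "Q < 1"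
    and a_gt: "a > 3"
  shows "\<exists>N0 :: nat. \<exists>C :: real. \<forall>eps u du ddu u0 du0 ddu0 N J.
    0 < eps \<and> eps < 1 \<and>
    (\<comment> \<open>u in C^2[0,1] solves the two-point BVP\<close>
     \<forall>x\<in>{0..1}. (u has_real_derivative du x) (at x within {0..1}) \<and>
                 (du has_real_derivative ddu x) (at x within {0..1})) \<and>
    continuous_on {0..1} ddu \<and>
    (\<forall>x\<in>{0<..<1}. - eps * ddu x - b x * du x + c x * u x = f x) \<and>
    u 0 = 0 \<and> u 1 = 0 \<and>
    (\<comment> \<open>u0 solves the reduced problem (it is automatically C^2 on [0,1])\<close>
     \<forall>x\<in>{0..1}. (u0 has_real_derivative du0 x) (at x within {0..1}) \<and>
                 (du0 has_real_derivative ddu0 x) (at x within {0..1})) \<and>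
    (\<forall>x\<in>{0<..<1}. - b x * du0 x + c x * u0 x = f x) \<and>
    u0 1 = 0 \<and>
    N \<ge> N0 \<and> real J = Q * real N \<and>
    mesh_xi a eps beta (1 / eps) \<le> Q
    \<longrightarrow>
    (let K = - eps * du 0 / b 0;
         y   = (\<lambda>x. u x - u0 x - K * exp (- b 0 * x / eps));
         y1  = (\<lambda>x. du x - du0 x + K * (b 0 / eps) * exp (- b 0 * x / eps));
         y2  = (\<lambda>x. ddu x - ddu0 x - K * (b 0 / eps)\<^sup>2 * exp (- b 0 * x / eps));
         x   = mesh_pt a eps beta (1 / eps) N J
     in (\<forall>i. 1 \<le> i \<and> i \<le> J - 1 \<longrightarrow>
              \<bar>tau eps b x y y1 y2 i\<bar> \<le> C * ((ln eps)\<^sup>2 * real N powr (-2))) \<and>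
        \<bar>tau eps b x y y1 y2 J\<bar> \<le> C * (min eps (1 / real N) / real N + eps\<^sup>2 / real N) \<and>
        (\<forall>i. J + 1 \<le> i \<and> i \<le> N - 1 \<longrightarrow>
              \<bar>tau eps b x y y1 y2 i\<bar> \<le> C * (min eps (1 / real N) / real N)))"
proof -
  have smooth: "smooth_on 4 {0..1} b" "smooth_on 4 {0..1} c" "smooth_on 4 {0..1} f"
    using b_C4 c_C4 f_C4 by (auto intro: Ck_on_imp_smooth_on)
  show ?thesis
  proof (cases "\<exists>W0 dW0 ddW0. deriv_on W0 dW0 {0..1} \<and> deriv_on dW0 ddW0 {0..1} \<and>
      (\<forall>x\<in>{0<..<1}. - b x * dW0 x + c x * W0 x = f x) \<and> W0 1 = 0")
    case False
    \<comment> \<open>then no \<open>u0\<close> satisfies the hypotheses, and the claim holds vacuously\<close>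
    then show ?thesis unfolding deriv_on_def by blast
  next
    case True
    then obtain W0 dW0 ddW0 where W0: "deriv_on W0 dW0 {0..1}" "deriv_on dW0 ddW0 {0..1}"
      "\<forall>x\<in>{0<..<1}. - b x * dW0 x + c x * W0 x = f x" "W0 1 = 0"
      by blast
    obtain b1 b2 c1 c2 U0 U1 U2 U3 U4 beta1 Bm Cm Fm Um
      where "layer_data b b1 b2 c c1 c2 f U0 U1 U2 U3 U4 beta beta1 Bm Cm Fm Um"
      using layer_data_exists[OF smooth beta_pos b_gt c_nonneg W0] by blast
    then interpret layer_data b b1 b2 c c1 c2 f U0 U1 U2 U3 U4 beta beta1 Bm Cm Fm Um .
    show ?thesis
      by (intro exI[of _ "nat \<lceil>a / ((a - 3) * Q)\<rceil>"] exI[of _ "asi_error_const a beta Q Bm Y_max"]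
          allI impI, unfold Let_def, rule remainder_truncation_error[OF a_gt Q_pos Q_lt1])
        (auto simp: deriv_on_def)
  qed
qed

end
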